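(* Let $q$ be a non-negative integer and $\Lambda$ a unital commutative ring which is $q$-torsion-free. A Lie algebra $\mathfrak g$ over $\Lambda$ is strongly $q$-capable if and only if $Z^{\curlywedge}_q(\mathfrak g)=\{0\}$.
   Context: All Lie algebras are over $\Lambda$. $Z(\mathfrak m)$ is the center of $\mathfrak m$ and $Z_q(\mathfrak m)=\{e\in Z(\mathfrak m)\mid qe=0\}$. A Lie algebra $\mathfrak g$ is strongly $q$-capable if there exists a Lie algebra $\mathfrak m$ with $Z(\mathfrak m)=Z_q(\mathfrak m)$ and $\mathfrak g\cong\mathfrak m/Z(\mathfrak m)$. Non-abelian $q$-exterior square: for $q\ge1$, $\mathfrak g\wedge^q\mathfrak g$ is the Lie algebra generated by symbols $h\wedge g$ and $\{h\}$ ($h,g\in\mathfrak g$) subject to, for all $h,h',g,g'\in\mathfrak g$, $\lambda,\lambda'\in\Lambda$: (1) $\lambda(h\wedge g)=\lambda h\wedge g=h\wedge\lambda g$; (2),(3) bilinearity in each variable; (4) $[h,h']\wedge g=h\wedge[h',g]-h'\wedge[h,g]$; (5) $h\wedge[g,g']=[g',h]\wedge g-[g,h]\wedge g'$; (6) $[h\wedge g,h'\wedge g']=[h,g]\wedge[h',g']$; (7) $[\{h'\},h\wedge g]=[qh',h]\wedge g+h\wedge[qh',g]$; (8) $\{\lambda h+\lambda'h'\}=\lambda\{h\}+\lambda'\{h'\}$; (9) $[\{h\},\{h'\}]=qh\wedge qh'$; (10) $\{[h,g]\}=q(h\wedge g)$; (11) $h\wedge h=0$. For $q=0$ it is generated by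 the $h\wedge g$ subject to (1)–(6) and (11) (Ellis's non-abelian exterior square). The $q$-exterior center in the sense of Ellis is $Z^{\curlywedge}_q(\mathfrak g)=\{g\in\mathfrak g\mid g\wedge x=0 \text{ in } \mathfrak g\wedge^q\mathfrak g \text{ for all } x\in\mathfrak g\}$. *)

theory Defs
  imports Main
begin

record ('a, 'r) lie_alg =
  lcarrier :: "'a set"
  ladd  :: "'a \<Rightarrow> 'a \<Rightarrow> 'a"
  lzero :: "'a"
  lneg  :: "'a \<Rightarrow> 'a"
  lsmul :: "'r \<Rightarrow> 'a \<Rightarrow> 'a"
  lbr   :: "'a \<Rightarrow> 'a \<Rightarrow> 'a"

definition lie_algebra :: "('a, 'r::comm_ring_1) lie_alg \<Rightarrow> bool" where
  "lie_algebra L \<longleftrightarrow>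
     (let C = lcarrier L; add = ladd L; z = lzero L; neg = lneg L; sm = lsmul L; br = lbr L in
       z \<in> C
     \<and> (\<forall>x\<in>C. \<forall>y\<in>C. add x y \<in> C)
     \<and> (\<forall>x\<in>C. neg x \<in> C)
     \<and> (\<forall>r x. x \<in> C \<longrightarrow> sm r x \<in> C)
     \<and> (\<forall>x\<in>C. \<forall>y\<in>C. br x y \<in> C)
     \<and> (\<forall>x\<in>C. \<forall>y\<in>C. \<forall>w\<in>C. add (add x y) w = add x (add y w))
     \<and> (\<forall>x\<in>C. \<forall>y\<in>C. add x y = add y x)
     \<and> (\<forall>x\<in>C. add x z = x)
     \<and> (\<forall>x\<in>C. add x (neg x) = z)
     \<and> (\<forall>r x y. x \<in> C \<longrightarrow> y \<in> C \<longrightarrow> sm r (add x y) = add (sm r x) (sm r y))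
     \<and> (\<forall>r s x. x \<in> C \<longrightarrow> sm (r + s) x = add (sm r x) (sm s x))
     \<and> (\<forall>r s x. x \<in> C \<longrightarrow> sm r (sm s x) = sm (r * s) x)
     \<and> (\<forall>x\<in>C. sm 1 x = x)
     \<and> (\<forall>x\<in>C. \<forall>y\<in>C. \<forall>w\<in>C. br (add x y) w = add (br x w) (br y w))
     \<and> (\<forall>x\<in>C. \<forall>y\<in>C. \<forall>w\<in>C. br x (add y w) = add (br x y) (br x w))
     \<and> (\<forall>r x y. x \<in> C \<longrightarrow> y \<in> C \<longrightarrow> br (sm r x) y = sm r (br x y))
     \<and> (\<forall>r x y. x \<in> C \<longrightarrow> y \<in> C \<longrightarrow> br x (sm r y) = sm r (br x y))
     \<and> (\<forall>x\<in>C. br x x = z)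
     \<and> (\<forall>x\<in>C. \<forall>y\<in>C. \<forall>w\<in>C.
          add (br x (br y w)) (add (br y (br w x)) (br w (br x y))) = z))"

definition lie_hom :: "('a \<Rightarrow> 'b) \<Rightarrow> ('a, 'r) lie_alg \<Rightarrow> ('b, 'r) lie_alg \<Rightarrow> bool" where
  "lie_hom f L M \<longleftrightarrow>
     (\<forall>x\<in>lcarrier L. f x \<in> lcarrier M)
   \<and> (\<forall>x\<in>lcarrier L. \<forall>y\<in>lcarrier L. f (ladd L x y) = ladd M (f x) (f y))
   \<and> (\<forall>r. \<forall>x\<in>lcarrier L. f (lsmul L r x) = lsmul M r (f x))
   \<and> (\<forall>x\<in>lcarrier L. \<forall>y\<in>lcarrier L. f (lbr L x y) = lbr M (f x) (f y))"

definition lie_iso :: "('a \<Rightarrow> 'b) \<Rightarrow> ('a, 'r) lie_alg \<Rightarrow> ('b, 'r) lie_alg \<Rightarrow> bool" where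
  "lie_iso f L M \<longleftrightarrow> lie_hom f L M \<and> bij_betw f (lcarrier L) (lcarrier M)"

definition lie_center :: "('a, 'r) lie_alg \<Rightarrow> 'a set" where
  "lie_center L = {e \<in> lcarrier L. \<forall>x\<in>lcarrier L. lbr L e x = lzero L}"

definition lie_center_q :: "nat \<Rightarrow> ('a, 'r::comm_ring_1) lie_alg \<Rightarrow> 'a set" where
  "lie_center_q q L = {e \<in> lie_center L. lsmul L (of_nat q) e = lzero L}"

definition quot_center :: "('a, 'r) lie_alg \<Rightarrow> ('a set, 'r) lie_alg" where
  "quot_center L =
     (let Z = lie_center L in
      \<lparr> lcarrier = (\<lambda>x. {ladd L x z | z. z \<in> Z}) ` lcarrier L,
        ladd = (\<lambda>A B. {ladd L a b | a b. a \<in> A \<and> b \<in> B}),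
        lzero = Z,
        lneg = (\<lambda>A. lneg L ` A),
        lsmul = (\<lambda>r A. {ladd L (lsmul L r a) z | a z. a \<in> A \<and> z \<in> Z}),
        lbr = (\<lambda>A B. {ladd L (lbr L a b) z | a b z. a \<in> A \<and> b \<in> B \<and> z \<in> Z}) \<rparr>)"

text \<open>HOL cannot quantify over types inside a formula, so the ambient Lie algebra m
  is taken on an arbitrary carrier set inside a type 'm, given as a parameter.\<close>

definition strongly_q_capable ::
  "nat \<Rightarrow> ('a, 'r::comm_ring_1) lie_alg \<Rightarrow> 'm itself \<Rightarrow> bool" where
  "strongly_q_capable q g (_ :: 'm itself) \<longleftrightarrow>
     (\<exists>(m :: ('m, 'r) lie_alg) f. lie_algebra m \<and> lie_center m = lie_center_q q m
          \<and> lie_iso f g (quot_center m))"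

definition q_torsion_free :: "nat \<Rightarrow> 'r::comm_ring_1 itself \<Rightarrow> bool" where
  "q_torsion_free q (_ :: 'r itself) \<longleftrightarrow>
     (0 < q \<longrightarrow> (\<forall>r::'r. of_nat q * r = 0 \<longrightarrow> r = 0))"

datatype 'a xgen = XWedge 'a 'a | XBrace 'a

datatype ('x, 'r) fterm =
    FGen 'x
  | FZero
  | FAdd "('x, 'r) fterm" "('x, 'r) fterm"
  | FNeg "('x, 'r) fterm"
  | FSmul 'r "('x, 'r) fterm"
  | FBr "('x, 'r) fterm" "('x, 'r) fterm"

text \<open>For q = 0 the generators {h}
  are killed, so that the quotient is Ellis's non-abelian exterior square.\<close>

inductive qext_eq :: "nat \<Rightarrow> ('a, 'r::comm_ring_1) lie_alg
    \<Rightarrow> ('a xgen, 'r) fterm \<Rightarrow> ('a xgen, 'r) fterm \<Rightarrow> bool"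
  for q :: nat and g :: "('a, 'r) lie_alg" where
  refl: "qext_eq q g x x"
| sym: "qext_eq q g x y \<Longrightarrow> qext_eq q g y x"
| trans: "qext_eq q g x y \<Longrightarrow> qext_eq q g y z \<Longrightarrow> qext_eq q g x z"
| cong_add: "qext_eq q g x x' \<Longrightarrow> qext_eq q g y y' \<Longrightarrow> qext_eq q g (FAdd x y) (FAdd x' y')"
| cong_neg: "qext_eq q g x x' \<Longrightarrow> qext_eq q g (FNeg x) (FNeg x')"
| cong_smul: "qext_eq q g x x' \<Longrightarrow> qext_eq q g (FSmul r x) (FSmul r x')"
| cong_br: "qext_eq q g x x' \<Longrightarrow> qext_eq q g y y' \<Longrightarrow> qext_eq q g (FBr x y) (FBr x' y')"
| add_assoc: "qext_eq q g (FAdd (FAdd x y) z) (FAdd x (FAdd y z))"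
| add_comm: "qext_eq q g (FAdd x y) (FAdd y x)"
| add_zero: "qext_eq q g (FAdd x FZero) x"
| add_neg: "qext_eq q g (FAdd x (FNeg x)) FZero"
| smul_add: "qext_eq q g (FSmul r (FAdd x y)) (FAdd (FSmul r x) (FSmul r y))"
| add_smul: "qext_eq q g (FSmul (r + s) x) (FAdd (FSmul r x) (FSmul s x))"
| smul_smul: "qext_eq q g (FSmul r (FSmul s x)) (FSmul (r * s) x)"
| one_smul: "qext_eq q g (FSmul 1 x) x"
| br_add_left: "qext_eq q g (FBr (FAdd x y) z) (FAdd (FBr x z) (FBr y z))"
| br_add_right: "qext_eq q g (FBr x (FAdd y z)) (FAdd (FBr x y) (FBr x z))"
| br_smul_left: "qext_eq q g (FBr (FSmul r x) y) (FSmul r (FBr x y))"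
| br_smul_right: "qext_eq q g (FBr x (FSmul r y)) (FSmul r (FBr x y))"
| br_self: "qext_eq q g (FBr x x) FZero"
| jacobi: "qext_eq q g (FAdd (FBr x (FBr y z)) (FAdd (FBr y (FBr z x)) (FBr z (FBr x y)))) FZero"
| rel1a: "h \<in> lcarrier g \<Longrightarrow> k \<in> lcarrier g \<Longrightarrow>
     qext_eq q g (FSmul r (FGen (XWedge h k))) (FGen (XWedge (lsmul g r h) k))"
| rel1b: "h \<in> lcarrier g \<Longrightarrow> k \<in> lcarrier g \<Longrightarrow>
     qext_eq q g (FSmul r (FGen (XWedge h k))) (FGen (XWedge h (lsmul g r k)))"
| rel2: "h \<in> lcarrier g \<Longrightarrow> h' \<in> lcarrier g \<Longrightarrow> k \<in> lcarrier g \<Longrightarrow>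
     qext_eq q g (FGen (XWedge (ladd g h h') k)) (FAdd (FGen (XWedge h k)) (FGen (XWedge h' k)))"
| rel3: "h \<in> lcarrier g \<Longrightarrow> k \<in> lcarrier g \<Longrightarrow> k' \<in> lcarrier g \<Longrightarrow>
     qext_eq q g (FGen (XWedge h (ladd g k k'))) (FAdd (FGen (XWedge h k)) (FGen (XWedge h k')))"
| rel4: "h \<in> lcarrier g \<Longrightarrow> h' \<in> lcarrier g \<Longrightarrow> k \<in> lcarrier g \<Longrightarrow>
     qext_eq q g (FGen (XWedge (lbr g h h') k))
       (FAdd (FGen (XWedge h (lbr g h' k))) (FNeg (FGen (XWedge h' (lbr g h k)))))"
| rel5: "h \<in> lcarrier g \<Longrightarrow> k \<in> lcarrier g \<Longrightarrow> k' \<in> lcarrier g \<Longrightarrow>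
     qext_eq q g (FGen (XWedge h (lbr g k k')))
       (FAdd (FGen (XWedge (lbr g k' h) k)) (FNeg (FGen (XWedge (lbr g k h) k'))))"
| rel6: "h \<in> lcarrier g \<Longrightarrow> k \<in> lcarrier g \<Longrightarrow> h' \<in> lcarrier g \<Longrightarrow> k' \<in> lcarrier g \<Longrightarrow>
     qext_eq q g (FBr (FGen (XWedge h k)) (FGen (XWedge h' k')))
       (FGen (XWedge (lbr g h k) (lbr g h' k')))"
| rel7: "h \<in> lcarrier g \<Longrightarrow> h' \<in> lcarrier g \<Longrightarrow> k \<in> lcarrier g \<Longrightarrow>
     qext_eq q g (FBr (FGen (XBrace h')) (FGen (XWedge h k)))
       (FAdd (FGen (XWedge (lbr g (lsmul g (of_nat q) h') h) k))
             (FGen (XWedge h (lbr g (lsmul g (of_nat q) h') k))))"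
| rel8: "h \<in> lcarrier g \<Longrightarrow> h' \<in> lcarrier g \<Longrightarrow>
     qext_eq q g (FGen (XBrace (ladd g (lsmul g r h) (lsmul g r' h'))))
       (FAdd (FSmul r (FGen (XBrace h))) (FSmul r' (FGen (XBrace h'))))"
| rel9: "h \<in> lcarrier g \<Longrightarrow> h' \<in> lcarrier g \<Longrightarrow>
     qext_eq q g (FBr (FGen (XBrace h)) (FGen (XBrace h')))
       (FGen (XWedge (lsmul g (of_nat q) h) (lsmul g (of_nat q) h')))"
| rel10: "h \<in> lcarrier g \<Longrightarrow> k \<in> lcarrier g \<Longrightarrow>
     qext_eq q g (FGen (XBrace (lbr g h k))) (FSmul (of_nat q) (FGen (XWedge h k)))"
| rel11: "h \<in> lcarrier g \<Longrightarrow> qext_eq q g (FGen (XWedge h h)) FZero"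
| rel_q0: "q = 0 \<Longrightarrow> h \<in> lcarrier g \<Longrightarrow> qext_eq q g (FGen (XBrace h)) FZero"

definition ext_center_q :: "nat \<Rightarrow> ('a, 'r::comm_ring_1) lie_alg \<Rightarrow> 'a set" where
  "ext_center_q q g =
     {x \<in> lcarrier g. \<forall>y\<in>lcarrier g. qext_eq q g (FGen (XWedge x y)) FZero}"

end

theory Submission
  imports Defs
begin

text \<open>
  If g is isomorphic to m/Z(m) with Z(m) = Z_q(m), choose lifts l : g \<rightarrow> m. Then
  h \<and> k \<mapsto> [l h, l k] and {h} \<mapsto> q l h respect the relations (1)-(11): changing a lift by a
  central element changes neither brackets nor, since Z(m) is killed by q, q-multiples. An element
  x of the exterior centre therefore has [l x, m] = 0, so l x is central and x = 0.

  Conversely, let m consist of triples (y, t, c) with y \<in> g, t a term of g \<and>^q g and c a formal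
  combination of symbols {x} such that q t + \<Sigma> c = {y}, modulo
  (y, t, c) \<sim> (y, t + \<Sigma> k, c - q k), with bracket [(y, t, c), (y', t', c')] = ([y, y'], y \<and> y', 0).
  Triples with y = 0 are central and q-torsion, as q (0, t, c) \<sim> (0, q t + \<Sigma> c, 0) = (0, {0}, 0).
  For a central triple, bracketing with lifts of y' gives y \<and> y' + \<Sigma> k = 0 with q k = 0;
  q-torsion-freeness kills \<Sigma> k, so y lies in the exterior centre and vanishes if that centre is
  trivial. Hence the first projection identifies m/Z(m) with g.\<close>

section \<open>Modules and Lie algebras up to a congruence\<close>

text \<open>
  The laws hold only modulo a congruence, so that one development serves genuine Lie algebras
  (with equality), the term algebra modulo the relations of the exterior square, and the covering
  constructed below.\<close>

locale setoid_module =
  fixes C :: "'a set" and eq :: "'a \<Rightarrow> 'a \<Rightarrow> bool" (infix "\<doteq>" 50)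
    and add :: "'a \<Rightarrow> 'a \<Rightarrow> 'a" and zero :: 'a and neg :: "'a \<Rightarrow> 'a"
    and smul :: "'r::comm_ring_1 \<Rightarrow> 'a \<Rightarrow> 'a"
  assumes zero_closed[simp]: "zero \<in> C"
    and add_closed[simp]: "x \<in> C \<Longrightarrow> y \<in> C \<Longrightarrow> add x y \<in> C"
    and neg_closed[simp]: "x \<in> C \<Longrightarrow> neg x \<in> C"
    and smul_closed[simp]: "x \<in> C \<Longrightarrow> smul r x \<in> C"
    and eq_refl[simp]: "x \<doteq> x"
    and eq_sym: "x \<doteq> y \<Longrightarrow> y \<doteq> x"
    and eq_trans[trans]: "x \<doteq> y \<Longrightarrow> y \<doteq> w \<Longrightarrow> x \<doteq> w"
    and add_cong: "x \<doteq> x' \<Longrightarrow> y \<doteq> y' \<Longrightarrow> add x y \<doteq> add x' y'"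
    and neg_cong: "x \<doteq> x' \<Longrightarrow> neg x \<doteq> neg x'"
    and smul_cong: "x \<doteq> x' \<Longrightarrow> smul r x \<doteq> smul r x'"
    and add_assoc: "x \<in> C \<Longrightarrow> y \<in> C \<Longrightarrow> w \<in> C \<Longrightarrow> add (add x y) w \<doteq> add x (add y w)"
    and add_comm: "x \<in> C \<Longrightarrow> y \<in> C \<Longrightarrow> add x y \<doteq> add y x"
    and add_zero: "x \<in> C \<Longrightarrow> add x zero \<doteq> x"
    and add_neg: "x \<in> C \<Longrightarrow> add x (neg x) \<doteq> zero"
    and smul_add: "x \<in> C \<Longrightarrow> y \<in> C \<Longrightarrow> smul r (add x y) \<doteq> add (smul r x) (smul r y)"
    and add_smul: "x \<in> C \<Longrightarrow> smul (r + s) x \<doteq> add (smul r x) (smul s x)"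
    and smul_smul: "x \<in> C \<Longrightarrow> smul r (smul s x) \<doteq> smul (r * s) x"
    and one_smul: "x \<in> C \<Longrightarrow> smul 1 x \<doteq> x"
begin

lemma add_cong_left: "x \<doteq> x' \<Longrightarrow> add x y \<doteq> add x' y"
  by (rule add_cong) auto

lemma add_cong_right: "y \<doteq> y' \<Longrightarrow> add x y \<doteq> add x y'"
  by (rule add_cong) auto

lemma zero_add: "x \<in> C \<Longrightarrow> add zero x \<doteq> x"
  by (meson add_comm add_zero eq_trans zero_closed)

lemma neg_add_self: "x \<in> C \<Longrightarrow> add (neg x) x \<doteq> zero"
  by (meson add_comm add_neg eq_trans neg_closed)

lemma add_left_cancel:
  assumes x: "x \<in> C" and y: "y \<in> C" and w: "w \<in> C" and h: "add x y \<doteq> add x w"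
  shows "y \<doteq> w"
proof -
  have "y \<doteq> add zero y" using zero_add[OF y] by (rule eq_sym)
  also have "\<dots> \<doteq> add (add (neg x) x) y"
    by (rule add_cong_left, rule eq_sym, rule neg_add_self[OF x])
  also have "\<dots> \<doteq> add (neg x) (add x y)" using add_assoc x y by simp
  also have "\<dots> \<doteq> add (neg x) (add x w)" using h by (rule add_cong_right)
  also have "\<dots> \<doteq> add (add (neg x) x) w" using add_assoc[OF neg_closed[OF x] x w] by (rule eq_sym)
  also have "\<dots> \<doteq> add zero w" by (rule add_cong_left, rule neg_add_self[OF x])
  also have "\<dots> \<doteq> w" using zero_add[OF w] .
  finally show ?thesis .
qed

lemma add_idem_imp_zero:
  assumes x: "x \<in> C" and h: "add x x \<doteq> x"
  shows "x \<doteq> zero"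
proof -
  have "add x x \<doteq> add x zero" using h eq_sym[OF add_zero[OF x]] by (rule eq_trans)
  then show ?thesis using add_left_cancel[OF x x zero_closed] by simp
qed

lemma neg_unique:
  assumes x: "x \<in> C" and y: "y \<in> C" and h: "add x y \<doteq> zero"
  shows "y \<doteq> neg x"
proof -
  have "add x y \<doteq> add x (neg x)" using h eq_sym[OF add_neg[OF x]] by (rule eq_trans)
  then show ?thesis using add_left_cancel[OF x y neg_closed[OF x]] by simp
qed

lemma zero_smul:
  assumes x: "x \<in> C"
  shows "smul 0 x \<doteq> zero"
proof -
  have "add (smul 0 x) (smul 0 x) \<doteq> smul 0 x" using add_smul[OF x, of 0 0] by (auto intro: eq_sym)
  then show ?thesis using add_idem_imp_zero x by simp
qed

lemma smul_zero: "smul r zero \<doteq> zero"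
proof -
  have "add (smul r zero) (smul r zero) \<doteq> smul r (add zero zero)"
    using smul_add[of zero zero r] by (auto intro: eq_sym)
  also have "\<dots> \<doteq> smul r zero" by (rule smul_cong, rule add_zero) simp
  finally show ?thesis using add_idem_imp_zero by simp
qed

lemma smul_uminus:
  assumes x: "x \<in> C"
  shows "smul (- r) x \<doteq> neg (smul r x)"
proof -
  have "add (smul r x) (smul (- r) x) \<doteq> smul (r + - r) x" using add_smul[OF x] by (rule eq_sym)
  also have "\<dots> \<doteq> zero" using zero_smul[OF x] by simp
  finally show ?thesis using neg_unique x by simp
qed

lemma neg_zero: "neg zero \<doteq> zero"
  using neg_unique[OF zero_closed zero_closed] add_zero[OF zero_closed] by (auto intro: eq_sym)

lemma add_add_swap:
  assumes "a \<in> C" "b \<in> C" "c \<in> C" "d \<in> C"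
  shows "add (add a b) (add c d) \<doteq> add (add a c) (add b d)"
proof -
  have "add (add a b) (add c d) \<doteq> add a (add b (add c d))" using assms by (simp add: add_assoc)
  also have "\<dots> \<doteq> add a (add (add b c) d)"
    by (rule add_cong_right, rule eq_sym, rule add_assoc) (use assms in auto)
  also have "\<dots> \<doteq> add a (add (add c b) d)" using assms
    by (intro add_cong_right add_cong_left add_comm)
  also have "\<dots> \<doteq> add a (add c (add b d))" using assms
    by (intro add_cong_right) (simp add: add_assoc)
  also have "\<dots> \<doteq> add (add a c) (add b d)" by (rule eq_sym, rule add_assoc) (use assms in auto)
  finally show ?thesis .
qed

lemma add_diff_cancel_left:
  assumes "x \<in> C" "y \<in> C"
  shows "add (add x y) (neg x) \<doteq> y"
proof -
  have "add (add x y) (neg x) \<doteq> add (add y x) (neg x)" using assms by (intro add_cong_left add_comm)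
  also have "\<dots> \<doteq> add y (add x (neg x))" using assms by (simp add: add_assoc)
  also have "\<dots> \<doteq> add y zero" using assms by (intro add_cong_right add_neg)
  also have "\<dots> \<doteq> y" using assms by (simp add: add_zero)
  finally show ?thesis .
qed

lemma add_neg_cancel_left:
  assumes "x \<in> C" "y \<in> C"
  shows "add x (add (neg x) y) \<doteq> y"
proof -
  have "add x (add (neg x) y) \<doteq> add (add x (neg x)) y"
    using assms by (intro eq_sym[OF add_assoc]) simp_all
  also have "\<dots> \<doteq> add zero y" using assms by (intro add_cong_left add_neg)
  also have "\<dots> \<doteq> y" using assms by (simp add: zero_add)
  finally show ?thesis .
qed

lemma neg_add:
  assumes "x \<in> C" "y \<in> C"
  shows "neg (add x y) \<doteq> add (neg x) (neg y)"
proof -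
  have "add (add x y) (add (neg x) (neg y)) \<doteq> add (add x (neg x)) (add y (neg y))"
    using assms by (simp add: add_add_swap)
  also have "\<dots> \<doteq> add zero zero" using assms by (intro add_cong add_neg)
  also have "\<dots> \<doteq> zero" by (simp add: add_zero)
  finally have "add (add x y) (add (neg x) (neg y)) \<doteq> zero" .
  then show ?thesis using assms by (intro eq_sym[OF neg_unique]) auto
qed

lemma neg_neg:
  assumes "x \<in> C"
  shows "neg (neg x) \<doteq> x"
  using neg_unique[OF neg_closed[OF assms] assms] neg_add_self[OF assms] by (auto intro: eq_sym)

lemma eq_if_diff_zero:
  assumes "x \<in> C" "y \<in> C" "add x (neg y) \<doteq> zero"
  shows "x \<doteq> y"
proof -
  have "neg (neg y) \<doteq> neg (neg x)" using neg_unique assms by (simp add: neg_cong)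
  then show ?thesis using assms neg_neg by (meson eq_sym eq_trans)
qed

end

locale setoid_lie_algebra = setoid_module +
  fixes br :: "'a \<Rightarrow> 'a \<Rightarrow> 'a"
  assumes br_closed[simp]: "x \<in> C \<Longrightarrow> y \<in> C \<Longrightarrow> br x y \<in> C"
    and br_cong: "x \<doteq> x' \<Longrightarrow> y \<doteq> y' \<Longrightarrow> br x y \<doteq> br x' y'"
    and br_add_left: "x \<in> C \<Longrightarrow> y \<in> C \<Longrightarrow> w \<in> C \<Longrightarrow> br (add x y) w \<doteq> add (br x w) (br y w)"
    and br_add_right: "x \<in> C \<Longrightarrow> y \<in> C \<Longrightarrow> w \<in> C \<Longrightarrow> br x (add y w) \<doteq> add (br x y) (br x w)"
    and br_smul_left: "x \<in> C \<Longrightarrow> y \<in> C \<Longrightarrow> br (smul r x) y \<doteq> smul r (br x y)"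
    and br_smul_right: "x \<in> C \<Longrightarrow> y \<in> C \<Longrightarrow> br x (smul r y) \<doteq> smul r (br x y)"
    and br_self: "x \<in> C \<Longrightarrow> br x x \<doteq> zero"
    and jacobi: "x \<in> C \<Longrightarrow> y \<in> C \<Longrightarrow> w \<in> C \<Longrightarrow>
          add (br x (br y w)) (add (br y (br w x)) (br w (br x y))) \<doteq> zero"
begin

lemma br_zero_left:
  assumes "x \<in> C"
  shows "br zero x \<doteq> zero"
proof -
  have "add (br zero x) (br zero x) \<doteq> br (add zero zero) x"
    by (rule eq_sym, rule br_add_left) (use assms in auto)
  also have "\<dots> \<doteq> br zero x" by (intro br_cong add_zero) auto
  finally show ?thesis using add_idem_imp_zero assms by simp
qed

lemma br_anticomm:
  assumes x: "x \<in> C" and y: "y \<in> C"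
  shows "br y x \<doteq> neg (br x y)"
proof -
  have "zero \<doteq> br (add x y) (add x y)" by (rule eq_sym, rule br_self) (use x y in auto)
  also have "\<dots> \<doteq> add (br x (add x y)) (br y (add x y))" using x y by (simp add: br_add_left)
  also have "\<dots> \<doteq> add (add (br x x) (br x y)) (add (br y x) (br y y))"
    using x y by (intro add_cong br_add_right) auto
  also have "\<dots> \<doteq> add (add zero (br x y)) (add (br y x) zero)"
    using x y by (intro add_cong br_self eq_refl)
  also have "\<dots> \<doteq> add (br x y) (br y x)" using x y by (intro add_cong zero_add add_zero) auto
  finally show ?thesis using x y by (intro neg_unique) (auto intro: eq_sym)
qed

lemma br_neg_left:
  assumes x: "x \<in> C" and y: "y \<in> C"
  shows "br (neg x) y \<doteq> neg (br x y)"
proof -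
  have "add (br x y) (br (neg x) y) \<doteq> br (add x (neg x)) y"
    by (rule eq_sym, rule br_add_left) (use x y in auto)
  also have "\<dots> \<doteq> br zero y" using x by (intro br_cong add_neg) auto
  also have "\<dots> \<doteq> zero" using br_zero_left y .
  finally show ?thesis using x y by (intro neg_unique) auto
qed

lemma br_neg_right:
  assumes x: "x \<in> C" and y: "y \<in> C"
  shows "br x (neg y) \<doteq> neg (br x y)"
proof -
  have "br x (neg y) \<doteq> neg (br (neg y) x)" using x y by (simp add: br_anticomm)
  also have "\<dots> \<doteq> neg (neg (br y x))" using x y by (simp add: br_neg_left neg_cong)
  also have "\<dots> \<doteq> br y x" using x y by (simp add: neg_neg)
  also have "\<dots> \<doteq> neg (br x y)" using x y by (rule br_anticomm)
  finally show ?thesis .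
qed

end

lemma lie_algebra_imp_setoid_lie_algebra:
  assumes "lie_algebra L"
  shows "setoid_lie_algebra (lcarrier L) (=) (ladd L) (lzero L) (lneg L) (lsmul L) (lbr L)"
  using assms unfolding lie_algebra_def Let_def
  by (elim conjE, unfold_locales) meson+

section \<open>Quotient of a Lie algebra up to a congruence\<close>

locale setoid_lie_quotient = setoid_lie_algebra +
  fixes enc :: "'a \<Rightarrow> 'c"
  assumes enc_inj: "inj_on enc C"
begin

definition eq_class :: "'a \<Rightarrow> 'c set" where
  "eq_class a = enc ` {b \<in> C. b \<doteq> a}"

definition class_rep :: "'c set \<Rightarrow> 'a" where
  "class_rep X = (SOME a. a \<in> C \<and> eq_class a = X)"

definition quotient_lie where
  "quotient_lie =
     \<lparr> lcarrier = eq_class ` C,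
       ladd = (\<lambda>X Y. eq_class (add (class_rep X) (class_rep Y))),
       lzero = eq_class zero,
       lneg = (\<lambda>X. eq_class (neg (class_rep X))),
       lsmul = (\<lambda>r X. eq_class (smul r (class_rep X))),
       lbr = (\<lambda>X Y. eq_class (br (class_rep X) (class_rep Y))) \<rparr>"

lemma eq_class_eq_iff:
  assumes "a \<in> C" "b \<in> C"
  shows "eq_class a = eq_class b \<longleftrightarrow> a \<doteq> b"
proof
  assume "a \<doteq> b"
  then have "c \<doteq> a \<longleftrightarrow> c \<doteq> b" for c
    by (meson eq_sym eq_trans)
  then show "eq_class a = eq_class b" by (simp add: eq_class_def)
next
  assume "eq_class a = eq_class b"
  then have "enc a \<in> enc ` {c \<in> C. c \<doteq> b}" using assms(1) by (auto simp: eq_class_def)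
  then show "a \<doteq> b" using enc_inj assms(1) by (auto dest: inj_onD)
qed

lemma class_rep_eq_class:
  assumes "a \<in> C"
  shows "class_rep (eq_class a) \<in> C" "class_rep (eq_class a) \<doteq> a"
proof -
  have "class_rep (eq_class a) \<in> C \<and> eq_class (class_rep (eq_class a)) = eq_class a"
    unfolding class_rep_def by (rule someI[of _ a]) (use assms in simp)
  then show "class_rep (eq_class a) \<in> C" "class_rep (eq_class a) \<doteq> a"
    using eq_class_eq_iff assms by auto
qed

lemma quotient_lie_carrier: "lcarrier quotient_lie = eq_class ` C"
  by (simp add: quotient_lie_def)

lemma quotient_lie_zero: "lzero quotient_lie = eq_class zero"
  by (simp add: quotient_lie_def)

lemma quotient_lie_add:
  assumes "a \<in> C" "b \<in> C"
  shows "ladd quotient_lie (eq_class a) (eq_class b) = eq_class (add a b)"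
  using assms class_rep_eq_class[OF assms(1)] class_rep_eq_class[OF assms(2)]
  by (simp add: quotient_lie_def eq_class_eq_iff add_cong)

lemma quotient_lie_neg:
  assumes "a \<in> C"
  shows "lneg quotient_lie (eq_class a) = eq_class (neg a)"
  using assms class_rep_eq_class[OF assms]
  by (simp add: quotient_lie_def eq_class_eq_iff neg_cong)

lemma quotient_lie_smul:
  assumes "a \<in> C"
  shows "lsmul quotient_lie r (eq_class a) = eq_class (smul r a)"
  using assms class_rep_eq_class[OF assms]
  by (simp add: quotient_lie_def eq_class_eq_iff smul_cong)

lemma quotient_lie_br:
  assumes "a \<in> C" "b \<in> C"
  shows "lbr quotient_lie (eq_class a) (eq_class b) = eq_class (br a b)"
  using assms class_rep_eq_class[OF assms(1)] class_rep_eq_class[OF assms(2)]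
  by (simp add: quotient_lie_def eq_class_eq_iff br_cong)

lemmas quotient_lie_ops =
  quotient_lie_zero quotient_lie_add quotient_lie_neg quotient_lie_smul quotient_lie_br

lemma lie_algebra_quotient_lie: "lie_algebra quotient_lie"
  unfolding lie_algebra_def Let_def quotient_lie_carrier
  by (intro conjI allI impI ballI; (elim imageE)?)
     (simp_all add: quotient_lie_ops eq_class_eq_iff add_assoc add_comm add_zero add_neg
       smul_add add_smul smul_smul one_smul br_add_left br_add_right br_smul_left br_smul_right
       br_self jacobi)

end

section \<open>The centre and the quotient by it\<close>

definition center_coset :: "('a, 'r) lie_alg \<Rightarrow> 'a \<Rightarrow> 'a set" where
  "center_coset L u = {ladd L u z | z. z \<in> lie_center L}"

locale Lie_algebra =
  fixes L :: "('a, 'r::comm_ring_1) lie_alg"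
  assumes lie_algebra: "lie_algebra L"
begin

sublocale L: setoid_lie_algebra "lcarrier L" "(=)" "ladd L" "lzero L" "lneg L" "lsmul L" "lbr L"
  by (rule lie_algebra_imp_setoid_lie_algebra[OF lie_algebra])

lemma center_closed: "z \<in> lie_center L \<Longrightarrow> z \<in> lcarrier L"
  by (simp add: lie_center_def)

lemma center_br_left: "z \<in> lie_center L \<Longrightarrow> x \<in> lcarrier L \<Longrightarrow> lbr L z x = lzero L"
  by (simp add: lie_center_def)

lemma center_br_right:
  assumes "z \<in> lie_center L" "x \<in> lcarrier L"
  shows "lbr L x z = lzero L"
  using L.br_anticomm[of z x] assms L.neg_zero by (simp add: center_closed center_br_left)

lemma center_zero: "lzero L \<in> lie_center L"
  unfolding lie_center_def using L.br_zero_left by simp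

lemma center_add:
  assumes "z \<in> lie_center L" "w \<in> lie_center L"
  shows "ladd L z w \<in> lie_center L"
  using assms L.br_add_left L.add_zero by (simp add: lie_center_def)

lemma center_neg:
  assumes "z \<in> lie_center L"
  shows "lneg L z \<in> lie_center L"
  using assms L.br_neg_left L.neg_zero by (simp add: lie_center_def)

lemma center_smul:
  assumes "z \<in> lie_center L"
  shows "lsmul L r z \<in> lie_center L"
  using assms L.br_smul_left L.smul_zero by (simp add: lie_center_def)

lemma mem_center_coset: "x \<in> center_coset L u \<longleftrightarrow> (\<exists>z\<in>lie_center L. x = ladd L u z)"
  by (auto simp: center_coset_def)

lemma center_coset_self: "u \<in> lcarrier L \<Longrightarrow> u \<in> center_coset L u"
  using center_zero L.add_zero by (force simp: center_coset_def)

lemma center_coset_eq_iff: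
  assumes u: "u \<in> lcarrier L" and v: "v \<in> lcarrier L"
  shows "center_coset L u = center_coset L v \<longleftrightarrow> ladd L u (lneg L v) \<in> lie_center L"
proof
  assume "center_coset L u = center_coset L v"
  then obtain z where z: "z \<in> lie_center L" "u = ladd L v z"
    using center_coset_self[OF u] by (auto simp: mem_center_coset)
  then have "ladd L u (lneg L v) = z"
    using v center_closed[OF z(1)] L.add_diff_cancel_left by simp
  then show "ladd L u (lneg L v) \<in> lie_center L" using z by simp
next
  define d where "d = ladd L u (lneg L v)"
  assume "ladd L u (lneg L v) \<in> lie_center L"
  then have d: "d \<in> lie_center L" "d \<in> lcarrier L" by (simp_all add: d_def center_closed)
  have "ladd L v d = ladd L v (ladd L (lneg L v) u)" using u v L.add_comm by (simp add: d_def)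
  also have "\<dots> = u" using u v L.add_neg_cancel_left by simp
  finally have u_eq: "u = ladd L v d" ..
  have "lneg L d = ladd L (lneg L u) v" using u v L.neg_add L.neg_neg by (simp add: d_def)
  then have v_eq: "v = ladd L u (lneg L d)" using u v L.add_neg_cancel_left by simp
  show "center_coset L u = center_coset L v"
  proof (intro equalityI subsetI)
    fix x assume "x \<in> center_coset L u"
    then obtain z where z: "z \<in> lie_center L" "x = ladd L u z" by (auto simp: mem_center_coset)
    then have "x = ladd L v (ladd L d z)" using u_eq v d center_closed L.add_assoc by simp
    then show "x \<in> center_coset L v" using z d center_add by (auto simp: mem_center_coset)
  next
    fix x assume "x \<in> center_coset L v"
    then obtain z where z: "z \<in> lie_center L" "x = ladd L v z" by (auto simp: mem_center_coset)
    then have "x = ladd L u (ladd L (lneg L d) z)" using v_eq u d center_closed L.add_assoc by simp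
    then show "x \<in> center_coset L u" using z d center_add center_neg
      by (auto simp: mem_center_coset)
  qed
qed

lemma center_coset_eqE:
  assumes "center_coset L u = center_coset L v" "u \<in> lcarrier L"
  obtains z where "z \<in> lie_center L" "u = ladd L v z"
  using assms center_coset_self[of u] by (auto simp: mem_center_coset)

lemma br_add_center_left:
  assumes "z \<in> lie_center L" "u \<in> lcarrier L" "v \<in> lcarrier L"
  shows "lbr L (ladd L u z) v = lbr L u v"
  using assms center_closed L.br_add_left[of u z v] L.add_zero by (simp add: center_br_left)

lemma br_add_center_right:
  assumes "z \<in> lie_center L" "u \<in> lcarrier L" "v \<in> lcarrier L"
  shows "lbr L u (ladd L v z) = lbr L u v"
  using assms center_closed L.br_add_right[of u v z] L.add_zero by (simp add: center_br_right)

lemma center_coset_eq_imp_br_eq: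
  assumes "center_coset L u = center_coset L u'" "center_coset L v = center_coset L v'"
    and "u \<in> lcarrier L" "u' \<in> lcarrier L" "v \<in> lcarrier L" "v' \<in> lcarrier L"
  shows "lbr L u v = lbr L u' v'"
proof -
  obtain z where "z \<in> lie_center L" "u = ladd L u' z"
    using assms(1,3) by (rule center_coset_eqE)
  moreover obtain w where "w \<in> lie_center L" "v = ladd L v' w"
    using assms(2,5) by (rule center_coset_eqE)
  ultimately show ?thesis using assms center_closed
    by (simp add: br_add_center_left br_add_center_right)
qed

lemma center_coset_eq_imp_smul_eq:
  assumes "lie_center L = lie_center_q q L"
    and "center_coset L u = center_coset L u'" "u \<in> lcarrier L" "u' \<in> lcarrier L"
  shows "lsmul L (of_nat q) u = lsmul L (of_nat q) u'"
proof -
  obtain z where z: "z \<in> lie_center L" "u = ladd L u' z"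
    using assms(2,3) by (rule center_coset_eqE)
  from z(1) have "z \<in> lie_center_q q L" unfolding assms(1) .
  then have "lsmul L (of_nat q) z = lzero L" by (simp add: lie_center_q_def)
  then show ?thesis using z assms(3,4) center_closed L.smul_add[of u' z] L.add_zero by simp
qed

lemma quot_center_carrier: "lcarrier (quot_center L) = center_coset L ` lcarrier L"
  by (simp add: quot_center_def Let_def center_coset_def)

lemma quot_center_add:
  assumes u: "u \<in> lcarrier L" and v: "v \<in> lcarrier L"
  shows "ladd (quot_center L) (center_coset L u) (center_coset L v) = center_coset L (ladd L u v)"
proof -
  have "{ladd L a b |a b. a \<in> center_coset L u \<and> b \<in> center_coset L v}
      = center_coset L (ladd L u v)"
  proof (intro equalityI subsetI)
    fix x assume "x \<in> {ladd L a b |a b. a \<in> center_coset L u \<and> b \<in> center_coset L v}"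
    then obtain z w where z: "z \<in> lie_center L" "w \<in> lie_center L"
        "x = ladd L (ladd L u z) (ladd L v w)"
      by (auto simp: mem_center_coset)
    then have "x = ladd L (ladd L u v) (ladd L z w)" using u v center_closed
      by (simp add: L.add_add_swap)
    then show "x \<in> center_coset L (ladd L u v)" using z center_add by (auto simp: mem_center_coset)
  next
    fix x assume "x \<in> center_coset L (ladd L u v)"
    then obtain z where z: "z \<in> lie_center L" "x = ladd L (ladd L u v) z"
      by (auto simp: mem_center_coset)
    then have "x = ladd L (ladd L u z) (ladd L v (lzero L))"
      using L.add_add_swap[of u z v "lzero L"] L.add_zero u v center_closed[OF z(1)] by simp
    moreover have "ladd L u z \<in> center_coset L u" "ladd L v (lzero L) \<in> center_coset L v"
      using z center_zero by (auto simp: mem_center_coset)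
    ultimately show "x \<in> {ladd L a b |a b. a \<in> center_coset L u \<and> b \<in> center_coset L v}" by blast
  qed
  then show ?thesis by (simp add: quot_center_def Let_def)
qed

lemma quot_center_smul:
  assumes u: "u \<in> lcarrier L"
  shows "lsmul (quot_center L) r (center_coset L u) = center_coset L (lsmul L r u)"
proof -
  have "{ladd L (lsmul L r a) z |a z. a \<in> center_coset L u \<and> z \<in> lie_center L}
      = center_coset L (lsmul L r u)"
  proof (intro equalityI subsetI)
    fix x assume "x \<in> {ladd L (lsmul L r a) z |a z. a \<in> center_coset L u \<and> z \<in> lie_center L}"
    then obtain w z where z: "w \<in> lie_center L" "z \<in> lie_center L"
        "x = ladd L (lsmul L r (ladd L u w)) z"
      by (auto simp: mem_center_coset)
    then have "x = ladd L (lsmul L r u) (ladd L (lsmul L r w) z)" using u center_closed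
      by (simp add: L.smul_add L.add_assoc)
    then show "x \<in> center_coset L (lsmul L r u)"
      using z center_add center_smul by (auto simp: mem_center_coset)
  next
    fix x assume "x \<in> center_coset L (lsmul L r u)"
    then show "x \<in> {ladd L (lsmul L r a) z |a z. a \<in> center_coset L u \<and> z \<in> lie_center L}"
      using center_coset_self[OF u] by (auto simp: mem_center_coset)
  qed
  then show ?thesis by (simp add: quot_center_def Let_def)
qed

lemma quot_center_br:
  assumes u: "u \<in> lcarrier L" and v: "v \<in> lcarrier L"
  shows "lbr (quot_center L) (center_coset L u) (center_coset L v) = center_coset L (lbr L u v)"
proof -
  have "{ladd L (lbr L a b) z |a b z.
           a \<in> center_coset L u \<and> b \<in> center_coset L v \<and> z \<in> lie_center L}
      = center_coset L (lbr L u v)"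
  proof (intro equalityI subsetI)
    fix x
    assume "x \<in> {ladd L (lbr L a b) z |a b z.
                    a \<in> center_coset L u \<and> b \<in> center_coset L v \<and> z \<in> lie_center L}"
    then obtain a b z where ab: "a \<in> center_coset L u" "b \<in> center_coset L v"
        and z: "z \<in> lie_center L" "x = ladd L (lbr L a b) z"
      by blast
    have "lbr L a b = lbr L u v"
      using ab u v center_closed by (auto simp: mem_center_coset br_add_center_left br_add_center_right)
    then show "x \<in> center_coset L (lbr L u v)" using z by (auto simp: mem_center_coset)
  next
    fix x assume "x \<in> center_coset L (lbr L u v)"
    then show "x \<in> {ladd L (lbr L a b) z |a b z.
                       a \<in> center_coset L u \<and> b \<in> center_coset L v \<and> z \<in> lie_center L}"
      using center_coset_self[OF u] center_coset_self[OF v] by (auto simp: mem_center_coset)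
  qed
  then show ?thesis by (simp add: quot_center_def Let_def)
qed

lemma br_leibniz:
  assumes a: "a \<in> lcarrier L" and b: "b \<in> lcarrier L" and c: "c \<in> lcarrier L"
  shows "lbr L a (lbr L b c) = ladd L (lbr L (lbr L a b) c) (lbr L b (lbr L a c))"
proof -
  have "ladd L (ladd L (lbr L b (lbr L c a)) (lbr L c (lbr L a b))) (lbr L a (lbr L b c)) = lzero L"
    using L.jacobi[OF a b c] L.add_comm a b c by simp
  then have "lbr L a (lbr L b c) = lneg L (ladd L (lbr L b (lbr L c a)) (lbr L c (lbr L a b)))"
    using L.neg_unique a b c by simp
  also have "\<dots> = ladd L (lneg L (lbr L b (lbr L c a))) (lneg L (lbr L c (lbr L a b)))"
    using L.neg_add a b c by simp
  also have "\<dots> = ladd L (lbr L b (lbr L a c)) (lbr L (lbr L a b) c)"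
    using L.br_anticomm[of c a] L.br_anticomm[of c "lbr L a b"] L.br_neg_right[of b "lbr L c a"]
      a b c
    by simp
  also have "\<dots> = ladd L (lbr L (lbr L a b) c) (lbr L b (lbr L a c))"
    using L.add_comm a b c by simp
  finally show ?thesis .
qed

lemma br_br_left:
  assumes a: "a \<in> lcarrier L" and b: "b \<in> lcarrier L" and c: "c \<in> lcarrier L"
  shows "lbr L (lbr L a b) c = ladd L (lbr L a (lbr L b c)) (lneg L (lbr L b (lbr L a c)))"
proof -
  have "ladd L (lbr L a (lbr L b c)) (lneg L (lbr L b (lbr L a c)))
      = ladd L (ladd L (lbr L b (lbr L a c)) (lbr L (lbr L a b) c)) (lneg L (lbr L b (lbr L a c)))"
    using br_leibniz[OF a b c] L.add_comm a b c by simp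
  also have "\<dots> = lbr L (lbr L a b) c" using L.add_diff_cancel_left a b c by simp
  finally show ?thesis ..
qed

lemma br_br_right:
  assumes a: "a \<in> lcarrier L" and b: "b \<in> lcarrier L" and c: "c \<in> lcarrier L"
  shows "lbr L a (lbr L b c) = ladd L (lbr L (lbr L c a) b) (lneg L (lbr L (lbr L b a) c))"
proof -
  have "lbr L (lbr L c a) b = lbr L b (lbr L a c)"
    using L.br_anticomm[of b "lbr L c a"] L.br_anticomm[of c a] L.br_neg_right[of b "lbr L c a"]
      a b c
    by simp
  moreover have "lneg L (lbr L (lbr L b a) c) = lbr L (lbr L a b) c"
    using L.br_anticomm[of a b] L.br_neg_left[of "lbr L a b" c] L.neg_neg a b c by simp
  ultimately show ?thesis using br_leibniz[OF a b c] L.add_comm a b c by simp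
qed

end

section \<open>The non-abelian q-exterior square\<close>

interpretation Ext: setoid_lie_algebra UNIV "qext_eq q g" FAdd FZero FNeg FSmul FBr for q g
  by unfold_locales (auto intro: qext_eq.intros)

fun lin_coeff :: "('x, 'r::comm_ring_1) fterm \<Rightarrow> ('x, 'r) fterm \<Rightarrow> 'r" where
  "lin_coeff (FGen x) = (\<lambda>s. if s = FGen x then 1 else 0)"
| "lin_coeff FZero = (\<lambda>s. 0)"
| "lin_coeff (FAdd a b) = (\<lambda>s. lin_coeff a s + lin_coeff b s)"
| "lin_coeff (FNeg a) = (\<lambda>s. - lin_coeff a s)"
| "lin_coeff (FSmul r a) = (\<lambda>s. r * lin_coeff a s)"
| "lin_coeff (FBr a b) = (\<lambda>s. if s = FBr a b then 1 else 0)"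

fun lin_atoms :: "('x, 'r) fterm \<Rightarrow> ('x, 'r) fterm set" where
  "lin_atoms (FGen x) = {FGen x}"
| "lin_atoms FZero = {}"
| "lin_atoms (FAdd a b) = lin_atoms a \<union> lin_atoms b"
| "lin_atoms (FNeg a) = lin_atoms a"
| "lin_atoms (FSmul r a) = lin_atoms a"
| "lin_atoms (FBr a b) = {FBr a b}"

lemma finite_lin_atoms: "finite (lin_atoms a)"
  by (induction a) auto

fun lin_comb :: "('x, 'r::comm_ring_1) fterm list \<Rightarrow> (('x, 'r) fterm \<Rightarrow> 'r) \<Rightarrow> ('x, 'r) fterm" where
  "lin_comb [] f = FZero"
| "lin_comb (t # ts) f = FAdd (FSmul (f t) t) (lin_comb ts f)"

context
  fixes q :: nat and g :: "('a, 'r::comm_ring_1) lie_alg"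
begin

lemma lin_comb_zero: "(\<And>s. s \<in> set ts \<Longrightarrow> f s = 0) \<Longrightarrow> qext_eq q g (lin_comb ts f) FZero"
proof (induction ts)
  case (Cons t ts)
  have "qext_eq q g (FAdd (FSmul (f t) t) (lin_comb ts f)) (FAdd FZero FZero)"
    using Cons by (intro Ext.add_cong) (auto intro: Ext.zero_smul)
  also have "qext_eq q g \<dots> FZero" by (rule Ext.add_zero) simp
  finally show ?case by simp
qed simp

lemma lin_comb_atom:
  "t \<in> set ts \<Longrightarrow> distinct ts \<Longrightarrow> qext_eq q g (lin_comb ts (\<lambda>s. if s = t then 1 else 0)) t"
proof (induction ts)
  case (Cons a ts)
  show ?case
  proof (cases "a = t")
    case True
    then have "qext_eq q g (lin_comb ts (\<lambda>s. if s = t then 1 else 0)) FZero"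
      using Cons by (intro lin_comb_zero) auto
    then have "qext_eq q g (FAdd (FSmul 1 t) (lin_comb ts (\<lambda>s. if s = t then 1 else 0)))
        (FAdd t FZero)"
      by (intro Ext.add_cong Ext.one_smul) simp
    also have "qext_eq q g \<dots> t" by (rule Ext.add_zero) simp
    finally show ?thesis using True by simp
  next
    case False
    then have "qext_eq q g (lin_comb ts (\<lambda>s. if s = t then 1 else 0)) t" using Cons by auto
    then have "qext_eq q g (FAdd (FSmul 0 a) (lin_comb ts (\<lambda>s. if s = t then 1 else 0)))
        (FAdd FZero t)"
      by (intro Ext.add_cong Ext.zero_smul) simp_all
    also have "qext_eq q g \<dots> t" by (rule Ext.zero_add) simp
    finally show ?thesis using False by simp
  qed
qed simp

lemma lin_comb_add:
  "qext_eq q g (lin_comb ts (\<lambda>s. f s + h s)) (FAdd (lin_comb ts f) (lin_comb ts h))"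
proof (induction ts)
  case Nil
  then show ?case using Ext.eq_sym[OF Ext.add_zero[of FZero]] by simp
next
  case (Cons t ts)
  have "qext_eq q g (FAdd (FSmul (f t + h t) t) (lin_comb ts (\<lambda>s. f s + h s)))
           (FAdd (FAdd (FSmul (f t) t) (FSmul (h t) t)) (FAdd (lin_comb ts f) (lin_comb ts h)))"
    using Cons by (intro Ext.add_cong Ext.add_smul) simp_all
  also have "qext_eq q g \<dots>
      (FAdd (FAdd (FSmul (f t) t) (lin_comb ts f)) (FAdd (FSmul (h t) t) (lin_comb ts h)))"
    by (rule Ext.add_add_swap) simp_all
  finally show ?case by simp
qed

lemma lin_comb_neg: "qext_eq q g (lin_comb ts (\<lambda>s. - f s)) (FNeg (lin_comb ts f))"
proof (induction ts)
  case Nil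
  then show ?case using Ext.eq_sym[OF Ext.neg_zero] by simp
next
  case (Cons t ts)
  have "qext_eq q g (FAdd (FSmul (- f t) t) (lin_comb ts (\<lambda>s. - f s)))
           (FAdd (FNeg (FSmul (f t) t)) (FNeg (lin_comb ts f)))"
    using Cons by (intro Ext.add_cong Ext.smul_uminus) simp_all
  also have "qext_eq q g \<dots> (FNeg (FAdd (FSmul (f t) t) (lin_comb ts f)))"
    by (rule Ext.eq_sym, rule Ext.neg_add) simp_all
  finally show ?case by simp
qed

lemma lin_comb_smul: "qext_eq q g (lin_comb ts (\<lambda>s. r * f s)) (FSmul r (lin_comb ts f))"
proof (induction ts)
  case Nil
  then show ?case using Ext.eq_sym[OF Ext.smul_zero] by simp
next
  case (Cons t ts)
  have "qext_eq q g (FAdd (FSmul (r * f t) t) (lin_comb ts (\<lambda>s. r * f s)))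
           (FAdd (FSmul r (FSmul (f t) t)) (FSmul r (lin_comb ts f)))"
    using Cons by (intro Ext.add_cong Ext.eq_sym[OF Ext.smul_smul]) simp_all
  also have "qext_eq q g \<dots> (FSmul r (FAdd (FSmul (f t) t) (lin_comb ts f)))"
    by (rule Ext.eq_sym, rule Ext.smul_add) simp_all
  finally show ?case by simp
qed

lemma qext_eq_lin_comb:
  "lin_atoms a \<subseteq> set ts \<Longrightarrow> distinct ts \<Longrightarrow> qext_eq q g a (lin_comb ts (lin_coeff a))"
proof (induction a)
  case (FGen x)
  then show ?case using Ext.eq_sym[OF lin_comb_atom[of "FGen x" ts]] by simp
next
  case FZero
  then show ?case using Ext.eq_sym[OF lin_comb_zero[of ts "\<lambda>s. 0"]] by simp
next
  case (FAdd a b)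
  then have "qext_eq q g (FAdd a b) (FAdd (lin_comb ts (lin_coeff a)) (lin_comb ts (lin_coeff b)))"
    by (intro Ext.add_cong) auto
  also have "qext_eq q g \<dots> (lin_comb ts (lin_coeff (FAdd a b)))"
    using Ext.eq_sym[OF lin_comb_add[of ts "lin_coeff a" "lin_coeff b"]] by simp
  finally show ?case .
next
  case (FNeg a)
  then have "qext_eq q g (FNeg a) (FNeg (lin_comb ts (lin_coeff a)))" by (intro Ext.neg_cong) auto
  also have "qext_eq q g \<dots> (lin_comb ts (lin_coeff (FNeg a)))"
    using Ext.eq_sym[OF lin_comb_neg[of ts "lin_coeff a"]] by simp
  finally show ?case .
next
  case (FSmul r a)
  then have "qext_eq q g (FSmul r a) (FSmul r (lin_comb ts (lin_coeff a)))"
    by (intro Ext.smul_cong) auto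
  also have "qext_eq q g \<dots> (lin_comb ts (lin_coeff (FSmul r a)))"
    using Ext.eq_sym[OF lin_comb_smul[of ts r "lin_coeff a"]] by simp
  finally show ?case .
next
  case (FBr a b)
  then show ?case using Ext.eq_sym[OF lin_comb_atom[of "FBr a b" ts]] by simp
qed

text \<open>
  Generators and brackets are the atoms of lin_coeff, so this discharges every identity of the
  free module on them.\<close>

lemma qext_eq_if_lin_coeff_eq:
  assumes "lin_coeff a = lin_coeff b"
  shows "qext_eq q g a b"
proof -
  obtain ts where ts: "set ts = lin_atoms a \<union> lin_atoms b" "distinct ts"
    using finite_distinct_list[of "lin_atoms a \<union> lin_atoms b"] finite_lin_atoms by blast
  have "qext_eq q g a (lin_comb ts (lin_coeff a))" using ts by (intro qext_eq_lin_comb) auto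
  also have "lin_comb ts (lin_coeff a) = lin_comb ts (lin_coeff b)" using assms by simp
  also have "qext_eq q g \<dots> b" using ts Ext.eq_sym[OF qext_eq_lin_comb[of b ts]] by simp
  finally show ?thesis .
qed

end

abbreviation wedge :: "'a \<Rightarrow> 'a \<Rightarrow> ('a xgen, 'r) fterm" where
  "wedge x y \<equiv> FGen (XWedge x y)"

abbreviation brace :: "'a \<Rightarrow> ('a xgen, 'r) fterm" where
  "brace x \<equiv> FGen (XBrace x)"

locale q_exterior_square =
  fixes q :: nat and g :: "('a, 'r::comm_ring_1) lie_alg"
  assumes lie_algebra_g: "lie_algebra g"
begin

sublocale G: setoid_lie_algebra "lcarrier g" "(=)" "ladd g" "lzero g" "lneg g" "lsmul g" "lbr g"
  by (rule lie_algebra_imp_setoid_lie_algebra[OF lie_algebra_g])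

abbreviation qext_equiv (infix "\<approx>" 50) where "a \<approx> b \<equiv> qext_eq q g a b"

lemma brace_zero: "brace (lzero g) \<approx> FZero"
proof -
  have "brace (ladd g (lsmul g 0 (lzero g)) (lsmul g 0 (lzero g))) \<approx>
        FAdd (FSmul 0 (brace (lzero g))) (FSmul 0 (brace (lzero g)))"
    by (rule qext_eq.rel8) simp_all
  also have "\<dots> \<approx> FAdd FZero FZero" by (intro Ext.add_cong Ext.zero_smul) simp_all
  also have "\<dots> \<approx> FZero" by (rule Ext.add_zero) simp
  finally show ?thesis by (simp add: G.zero_smul G.add_zero)
qed

lemma brace_add:
  assumes "x \<in> lcarrier g" "y \<in> lcarrier g"
  shows "brace (ladd g x y) \<approx> FAdd (brace x) (brace y)"
proof -
  have "brace (ladd g (lsmul g 1 x) (lsmul g 1 y)) \<approx> FAdd (FSmul 1 (brace x)) (FSmul 1 (brace y))"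
    by (rule qext_eq.rel8) (use assms in simp_all)
  also have "\<dots> \<approx> FAdd (brace x) (brace y)" by (intro Ext.add_cong Ext.one_smul) simp_all
  finally show ?thesis using assms by (simp add: G.one_smul)
qed

lemma brace_smul:
  assumes "x \<in> lcarrier g"
  shows "brace (lsmul g r x) \<approx> FSmul r (brace x)"
proof -
  have "brace (ladd g (lsmul g r x) (lsmul g 0 x)) \<approx> FAdd (FSmul r (brace x)) (FSmul 0 (brace x))"
    by (rule qext_eq.rel8) (use assms in simp_all)
  also have "\<dots> \<approx> FAdd (FSmul r (brace x)) FZero" by (intro Ext.add_cong Ext.zero_smul) simp_all
  also have "\<dots> \<approx> FSmul r (brace x)" by (rule Ext.add_zero) simp
  finally show ?thesis using assms by (simp add: G.zero_smul G.add_zero)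
qed

lemma neg_eq_smul_minus_one: "x \<in> lcarrier g \<Longrightarrow> lneg g x = lsmul g (-1) x"
  using G.smul_uminus[of x 1] by (simp add: G.one_smul)

lemma brace_neg:
  assumes "x \<in> lcarrier g"
  shows "brace (lneg g x) \<approx> FNeg (brace x)"
proof -
  have "brace (lneg g x) = brace (lsmul g (-1) x)" using assms by (simp add: neg_eq_smul_minus_one)
  also have "\<dots> \<approx> FSmul (-1) (brace x)" by (rule brace_smul[OF assms])
  also have "\<dots> \<approx> FNeg (brace x)" by (rule qext_eq_if_lin_coeff_eq) (simp add: fun_eq_iff)
  finally show ?thesis .
qed

lemma wedge_zero_left:
  assumes "y \<in> lcarrier g"
  shows "wedge (lzero g) y \<approx> FZero"
proof -
  have "wedge (ladd g (lzero g) (lzero g)) y \<approx> FAdd (wedge (lzero g) y) (wedge (lzero g) y)"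
    by (rule qext_eq.rel2) (use assms in simp_all)
  then have "FAdd (wedge (lzero g) y) (wedge (lzero g) y) \<approx> wedge (lzero g) y"
    by (simp add: G.add_zero Ext.eq_sym)
  then show ?thesis by (rule Ext.add_idem_imp_zero[rotated]) simp
qed

lemma wedge_anticomm:
  assumes a: "a \<in> lcarrier g" and b: "b \<in> lcarrier g"
  shows "wedge a b \<approx> FNeg (wedge b a)"
proof -
  have "FZero \<approx> wedge (ladd g a b) (ladd g a b)"
    by (rule Ext.eq_sym, rule qext_eq.rel11) (use a b in simp)
  also have "\<dots> \<approx> FAdd (wedge a (ladd g a b)) (wedge b (ladd g a b))"
    by (rule qext_eq.rel2) (use a b in simp_all)
  also have "\<dots> \<approx> FAdd (FAdd (wedge a a) (wedge a b)) (FAdd (wedge b a) (wedge b b))"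
    by (intro Ext.add_cong qext_eq.rel3) (use a b in simp_all)
  also have "\<dots> \<approx> FAdd (FAdd FZero (wedge a b)) (FAdd (wedge b a) FZero)"
    by (intro Ext.add_cong qext_eq.rel11 Ext.eq_refl) (use a b in simp_all)
  also have "\<dots> \<approx> FAdd (wedge b a) (wedge a b)"
    by (rule qext_eq_if_lin_coeff_eq) (simp add: fun_eq_iff)
  finally have "FAdd (wedge b a) (wedge a b) \<approx> FZero" by (rule Ext.eq_sym)
  then show ?thesis by (rule Ext.neg_unique[rotated 2]) simp_all
qed

lemma wedge_neg_right:
  assumes "y \<in> lcarrier g" "w \<in> lcarrier g"
  shows "wedge y (lneg g w) \<approx> FNeg (wedge y w)"
proof -
  have "wedge y (lneg g w) = wedge y (lsmul g (-1) w)" using assms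
    by (simp add: neg_eq_smul_minus_one)
  also have "\<dots> \<approx> FSmul (-1) (wedge y w)"
    by (rule Ext.eq_sym, rule qext_eq.rel1b) (use assms in simp_all)
  also have "\<dots> \<approx> FNeg (wedge y w)" by (rule qext_eq_if_lin_coeff_eq) (simp add: fun_eq_iff)
  finally show ?thesis .
qed

lemma wedge_jacobi:
  assumes x: "x \<in> lcarrier g" and y: "y \<in> lcarrier g" and z: "z \<in> lcarrier g"
  shows "FAdd (wedge x (lbr g y z)) (FAdd (wedge y (lbr g z x)) (wedge z (lbr g x y))) \<approx> FZero"
proof -
  define A B C :: "('a xgen, 'r) fterm"
    where "A = wedge x (lbr g y z)" and "B = wedge y (lbr g z x)" and "C = wedge z (lbr g x y)"
  have "FNeg C \<approx> wedge (lbr g x y) z"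
    unfolding C_def by (rule Ext.eq_sym, rule wedge_anticomm) (use x y z in simp_all)
  also have "\<dots> \<approx> FAdd (wedge x (lbr g y z)) (FNeg (wedge y (lbr g x z)))"
    by (rule qext_eq.rel4) (use x y z in simp_all)
  also have "lbr g x z = lneg g (lbr g z x)" by (rule G.br_anticomm[OF z x])
  also have "FAdd (wedge x (lbr g y z)) (FNeg (wedge y (lneg g (lbr g z x))))
      \<approx> FAdd A (FNeg (FNeg B))"
    unfolding A_def B_def
      by (intro Ext.add_cong Ext.eq_refl Ext.neg_cong wedge_neg_right) (use x y z in simp_all)
  finally have "FNeg C \<approx> FAdd A (FNeg (FNeg B))" .
  then have "FNeg (FNeg C) \<approx> FNeg (FAdd A (FNeg (FNeg B)))" by (rule Ext.neg_cong)
  then have "C \<approx> FNeg (FAdd A (FNeg (FNeg B)))" using Ext.neg_neg[of C]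
    by (meson Ext.eq_sym Ext.eq_trans UNIV_I)
  then have "FAdd A (FAdd B C) \<approx> FAdd A (FAdd B (FNeg (FAdd A (FNeg (FNeg B)))))"
    by (intro Ext.add_cong Ext.eq_refl)
  also have "\<dots> \<approx> FZero" by (rule qext_eq_if_lin_coeff_eq) (simp add: fun_eq_iff)
  finally show ?thesis unfolding A_def B_def C_def .
qed

end

section \<open>Strong q-capability forces a trivial exterior centre\<close>

fun interp_qext ::
  "nat \<Rightarrow> ('m, 'r::comm_ring_1) lie_alg \<Rightarrow> ('a \<Rightarrow> 'm) \<Rightarrow> ('a xgen, 'r) fterm \<Rightarrow> 'm"
where
  "interp_qext q m l (FGen (XWedge h k)) = lbr m (l h) (l k)"
| "interp_qext q m l (FGen (XBrace h)) = lsmul m (of_nat q) (l h)"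
| "interp_qext q m l FZero = lzero m"
| "interp_qext q m l (FAdd a b) = ladd m (interp_qext q m l a) (interp_qext q m l b)"
| "interp_qext q m l (FNeg a) = lneg m (interp_qext q m l a)"
| "interp_qext q m l (FSmul r a) = lsmul m r (interp_qext q m l a)"
| "interp_qext q m l (FBr a b) = lbr m (interp_qext q m l a) (interp_qext q m l b)"

locale center_quotient_iso = q_exterior_square q g for q and g :: "('a, 'r::comm_ring_1) lie_alg" +
  fixes m :: "('m, 'r) lie_alg" and f :: "'a \<Rightarrow> 'm set"
  assumes lie_algebra_m: "lie_algebra m"
    and center_eq_center_q: "lie_center m = lie_center_q q m"
    and iso: "lie_iso f g (quot_center m)"
begin

sublocale M: Lie_algebra m
  by unfold_locales (rule lie_algebra_m)

lemma lie_hom_f: "lie_hom f g (quot_center m)"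
  using iso by (simp add: lie_iso_def)

text \<open>Off the carrier the lift is zero, so that every term is interpreted inside m.\<close>

definition lift :: "'a \<Rightarrow> 'm" where
  "lift y = (if y \<in> lcarrier g then (SOME u. u \<in> lcarrier m \<and> f y = center_coset m u) else lzero m)"

lemma lift_spec:
  assumes "y \<in> lcarrier g"
  shows "lift y \<in> lcarrier m" "center_coset m (lift y) = f y"
proof -
  have "f y \<in> lcarrier (quot_center m)" using lie_hom_f assms by (simp add: lie_hom_def)
  then obtain u where "u \<in> lcarrier m \<and> f y = center_coset m u"
    by (auto simp: M.quot_center_carrier)
  then have "lift y \<in> lcarrier m \<and> f y = center_coset m (lift y)"
    unfolding lift_def if_P[OF assms] by (rule someI)
  then show "lift y \<in> lcarrier m" "center_coset m (lift y) = f y" by simp_all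
qed

lemma lift_closed[simp]: "lift y \<in> lcarrier m"
  using lift_spec(1)[of y] by (cases "y \<in> lcarrier g") (auto simp: lift_def)

lemma coset_lift_add:
  assumes "x \<in> lcarrier g" "y \<in> lcarrier g"
  shows "center_coset m (lift (ladd g x y)) = center_coset m (ladd m (lift x) (lift y))"
proof -
  have "center_coset m (lift (ladd g x y)) = ladd (quot_center m) (f x) (f y)"
    using assms lie_hom_f lift_spec by (simp add: lie_hom_def)
  then show ?thesis using assms by (simp add: lift_spec(2)[symmetric] M.quot_center_add)
qed

lemma coset_lift_smul:
  assumes "x \<in> lcarrier g"
  shows "center_coset m (lift (lsmul g r x)) = center_coset m (lsmul m r (lift x))"
proof -
  have "center_coset m (lift (lsmul g r x)) = lsmul (quot_center m) r (f x)"
    using assms lie_hom_f lift_spec by (simp add: lie_hom_def)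
  then show ?thesis using assms by (simp add: lift_spec(2)[symmetric] M.quot_center_smul)
qed

lemma coset_lift_br:
  assumes "x \<in> lcarrier g" "y \<in> lcarrier g"
  shows "center_coset m (lift (lbr g x y)) = center_coset m (lbr m (lift x) (lift y))"
proof -
  have "center_coset m (lift (lbr g x y)) = lbr (quot_center m) (f x) (f y)"
    using assms lie_hom_f lift_spec by (simp add: lie_hom_def)
  then show ?thesis using assms by (simp add: lift_spec(2)[symmetric] M.quot_center_br)
qed

lemma br_lift_cong:
  assumes "center_coset m (lift x) = center_coset m u" "u \<in> lcarrier m" "v \<in> lcarrier m"
  shows "lbr m (lift x) v = lbr m u v" "lbr m v (lift x) = lbr m v u"
  using M.center_coset_eq_imp_br_eq[OF assms(1) HOL.refl lift_closed assms(2) assms(3) assms(3)]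
    M.center_coset_eq_imp_br_eq[OF HOL.refl assms(1) assms(3) assms(3) lift_closed assms(2)]
  by simp_all

lemma qsmul_lift_cong:
  assumes "center_coset m (lift x) = center_coset m u" "u \<in> lcarrier m"
  shows "lsmul m (of_nat q) (lift x) = lsmul m (of_nat q) u"
  using M.center_coset_eq_imp_smul_eq[OF center_eq_center_q assms(1) lift_closed assms(2)] .

lemmas lift_simps =
  br_lift_cong[OF coset_lift_add] br_lift_cong[OF coset_lift_smul] br_lift_cong[OF coset_lift_br]
  qsmul_lift_cong[OF coset_lift_add] qsmul_lift_cong[OF coset_lift_smul]
  qsmul_lift_cong[OF coset_lift_br]

abbreviation interp where "interp \<equiv> interp_qext q m lift"

lemma interp_closed[simp]: "interp t \<in> lcarrier m"
proof (induction t)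
  case (FGen x) then show ?case by (cases x) simp_all
qed simp_all

lemma interp_respects_qext_eq: "s \<approx> t \<Longrightarrow> interp s = interp t"
proof (induction rule: qext_eq.induct)
  case (add_comm x y)
  then show ?case by (simp add: M.L.add_comm)
next
  case (rel4 h h' k)
  then show ?case by (simp add: lift_simps M.L.br_add_right M.L.br_neg_right M.br_br_left)
next
  case (rel5 h k k')
  then show ?case by (simp add: lift_simps M.br_br_right)
next
  case (rel7 h h' k)
  then show ?case
    using M.br_leibniz[of "lsmul m (of_nat q) (lift h')" "lift h" "lift k"]
      by (simp add: lift_simps)
next
  case (rel8 h h' r r')
  then show ?case by (simp add: lift_simps M.L.smul_add M.L.smul_smul mult.commute)
next
  case (rel10 h k)
  then show ?case by (simp add: lift_simps)
next
  case (rel_q0 h) then show ?case by (simp add: M.L.zero_smul)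
qed (simp_all add: lift_simps M.L.add_assoc M.L.add_zero M.L.add_neg M.L.smul_add
       M.L.add_smul M.L.smul_smul M.L.one_smul M.L.br_add_left M.L.br_add_right
       M.L.br_smul_left M.L.br_smul_right M.L.br_self M.L.jacobi)

lemma coset_lift_zero: "center_coset m (lift (lzero g)) = center_coset m (lzero m)"
  using coset_lift_smul[of "lzero g" 0] by (simp add: G.zero_smul M.L.zero_smul)

lemma lift_mem_center:
  assumes x: "x \<in> ext_center_q q g"
  shows "lift x \<in> lie_center m"
proof -
  have "lbr m (lift x) u = lzero m" if u: "u \<in> lcarrier m" for u
  proof -
    have "center_coset m u \<in> f ` lcarrier g"
      using iso u by (simp add: lie_iso_def bij_betw_def M.quot_center_carrier)
    then obtain y where y: "y \<in> lcarrier g" "center_coset m (lift y) = center_coset m u"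
      using lift_spec(2) by force
    have "lbr m (lift x) u = interp (wedge x y)"
      using br_lift_cong(2)[OF y(2) u lift_closed] by simp
    also have "\<dots> = interp FZero"
      using x y by (intro interp_respects_qext_eq) (simp add: ext_center_q_def)
    finally show ?thesis by simp
  qed
  then show ?thesis by (simp add: lie_center_def)
qed

lemma ext_center_q_trivial: "ext_center_q q g = {lzero g}"
proof (intro equalityI subsetI)
  fix x assume x: "x \<in> ext_center_q q g"
  then have xg: "x \<in> lcarrier g" by (simp add: ext_center_q_def)
  have "f x = center_coset m (lift x)" using lift_spec(2)[OF xg] ..
  also have "\<dots> = center_coset m (lzero m)"
    using M.center_coset_eq_iff[of "lift x" "lzero m"] lift_mem_center[OF x]
    by (simp add: M.L.neg_zero M.L.add_zero)
  also have "\<dots> = f (lzero g)" using lift_spec(2) coset_lift_zero by simp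
  finally have "f x = f (lzero g)" .
  then show "x \<in> {lzero g}" using iso xg by (simp add: lie_iso_def bij_betw_def inj_on_def)
next
  fix x assume "x \<in> {lzero g}"
  then show "x \<in> ext_center_q q g" using wedge_zero_left by (simp add: ext_center_q_def)
qed

end

section \<open>The covering Lie algebra\<close>

fun brace_sum :: "('r::comm_ring_1 \<times> 'a) list \<Rightarrow> ('a xgen, 'r) fterm" where
  "brace_sum [] = FZero"
| "brace_sum ((c, x) # cs) = FAdd (FSmul c (brace x)) (brace_sum cs)"

definition comb_coeff :: "('r::comm_ring_1 \<times> 'a) list \<Rightarrow> 'a \<Rightarrow> 'r" where
  "comb_coeff cs x = sum_list (map fst (filter (\<lambda>p. snd p = x) cs))"

definition comb_neg :: "('r::comm_ring_1 \<times> 'a) list \<Rightarrow> ('r \<times> 'a) list" where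
  "comb_neg cs = map (\<lambda>(c, x). (- c, x)) cs"

definition comb_smul :: "'r::comm_ring_1 \<Rightarrow> ('r \<times> 'a) list \<Rightarrow> ('r \<times> 'a) list" where
  "comb_smul r cs = map (\<lambda>(c, x). (r * c, x)) cs"

lemma comb_coeff_simps[simp]:
  "comb_coeff [] x = 0"
  "comb_coeff ((c, y) # cs) x = (if y = x then c else 0) + comb_coeff cs x"
  "comb_coeff (cs @ ds) x = comb_coeff cs x + comb_coeff ds x"
  by (simp_all add: comb_coeff_def)

lemma comb_coeff_neg[simp]: "comb_coeff (comb_neg cs) x = - comb_coeff cs x"
  by (induction cs) (auto simp: comb_neg_def)

lemma comb_coeff_smul[simp]: "comb_coeff (comb_smul r cs) x = r * comb_coeff cs x"
  by (induction cs) (auto simp: comb_smul_def algebra_simps)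

lemma comb_neg_simps[simp]:
  "comb_neg [] = []" "comb_neg ((c, x) # cs) = (- c, x) # comb_neg cs"
  "comb_neg (cs @ ds) = comb_neg cs @ comb_neg ds"
  by (simp_all add: comb_neg_def)

lemma comb_smul_simps[simp]:
  "comb_smul r [] = []" "comb_smul r ((c, x) # cs) = (r * c, x) # comb_smul r cs"
  "comb_smul r (cs @ ds) = comb_smul r cs @ comb_smul r ds"
  by (simp_all add: comb_smul_def)

lemma snd_set_comb_neg[simp]: "snd ` set (comb_neg cs) = snd ` set cs"
  by (force simp: comb_neg_def)

lemma snd_set_comb_smul[simp]: "snd ` set (comb_smul r cs) = snd ` set cs"
  by (force simp: comb_smul_def)

lemma lin_coeff_brace_sum_append[simp]:
  "lin_coeff (brace_sum (cs @ ds)) s = lin_coeff (brace_sum cs) s + lin_coeff (brace_sum ds) s"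
  by (induction cs rule: brace_sum.induct) (auto simp: algebra_simps)

lemma lin_coeff_brace_sum_neg[simp]:
  "lin_coeff (brace_sum (comb_neg cs)) s = - lin_coeff (brace_sum cs) s"
  by (induction cs rule: brace_sum.induct) (auto simp: algebra_simps)

lemma lin_coeff_brace_sum_smul[simp]:
  "lin_coeff (brace_sum (comb_smul r cs)) s = r * lin_coeff (brace_sum cs) s"
  by (induction cs rule: brace_sum.induct) (auto simp: algebra_simps)

lemma lin_coeff_brace_sum:
  "lin_coeff (brace_sum cs) s = (case s of FGen (XBrace x) \<Rightarrow> comb_coeff cs x | _ \<Rightarrow> 0)"
  by (induction cs rule: brace_sum.induct) (auto split: fterm.split xgen.split)

type_synonym ('a, 'r) cov = "'a \<times> ('a xgen, 'r) fterm \<times> ('r \<times> 'a) list"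

fun cov_valid :: "nat \<Rightarrow> ('a, 'r::comm_ring_1) lie_alg \<Rightarrow> ('a, 'r) cov \<Rightarrow> bool" where
  "cov_valid q g (y, t, cs) \<longleftrightarrow> y \<in> lcarrier g \<and> snd ` set cs \<subseteq> lcarrier g
     \<and> qext_eq q g (FAdd (FSmul (of_nat q) t) (brace_sum cs)) (brace y)"

fun cov_eq :: "nat \<Rightarrow> ('a, 'r::comm_ring_1) lie_alg \<Rightarrow> ('a, 'r) cov \<Rightarrow> ('a, 'r) cov \<Rightarrow> bool" where
  "cov_eq q g (y, t, cs) (y', t', cs') \<longleftrightarrow> y = y' \<and>
     (\<exists>ks. snd ` set ks \<subseteq> lcarrier g
        \<and> (\<forall>x. comb_coeff cs x = comb_coeff cs' x + of_nat q * comb_coeff ks x)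
        \<and> qext_eq q g (FAdd t (brace_sum ks)) t')"

fun cov_add :: "('a, 'r::comm_ring_1) lie_alg \<Rightarrow> ('a, 'r) cov \<Rightarrow> ('a, 'r) cov \<Rightarrow> ('a, 'r) cov" where
  "cov_add g (y, t, cs) (y', t', cs') = (ladd g y y', FAdd t t', cs @ cs')"

fun cov_neg :: "('a, 'r::comm_ring_1) lie_alg \<Rightarrow> ('a, 'r) cov \<Rightarrow> ('a, 'r) cov" where
  "cov_neg g (y, t, cs) = (lneg g y, FNeg t, comb_neg cs)"

fun cov_smul :: "('a, 'r::comm_ring_1) lie_alg \<Rightarrow> 'r \<Rightarrow> ('a, 'r) cov \<Rightarrow> ('a, 'r) cov" where
  "cov_smul g r (y, t, cs) = (lsmul g r y, FSmul r t, comb_smul r cs)"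

fun cov_br :: "('a, 'r::comm_ring_1) lie_alg \<Rightarrow> ('a, 'r) cov \<Rightarrow> ('a, 'r) cov \<Rightarrow> ('a, 'r) cov" where
  "cov_br g (y, t, cs) (y', t', cs') = (lbr g y y', wedge y y', [])"

definition cov_zero :: "('a, 'r::comm_ring_1) lie_alg \<Rightarrow> ('a, 'r) cov" where
  "cov_zero g = (lzero g, FZero, [])"

definition cov_of :: "'a \<Rightarrow> ('a, 'r::comm_ring_1) cov" where
  "cov_of y = (y, FZero, [(1, y)])"

lemma fst_cov_simps[simp]:
  "fst (cov_add g a b) = ladd g (fst a) (fst b)" "fst (cov_neg g a) = lneg g (fst a)"
  "fst (cov_smul g r a) = lsmul g r (fst a)" "fst (cov_br g a b) = lbr g (fst a) (fst b)"
  "fst (cov_zero g) = lzero g" "fst (cov_of y) = y"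
  by (cases a rule: prod_cases3, cases b rule: prod_cases3, simp_all add: cov_zero_def cov_of_def)+

context q_exterior_square
begin

lemma cov_eqI:
  assumes "fst a = fst b" "\<And>x. comb_coeff (snd (snd a)) x = comb_coeff (snd (snd b)) x"
    and "fst (snd a) \<approx> fst (snd b)"
  shows "cov_eq q g a b"
proof -
  obtain y t cs where a: "a = (y, t, cs)" by (cases a rule: prod_cases3)
  obtain y' t' cs' where b: "b = (y', t', cs')" by (cases b rule: prod_cases3)
  have "FAdd t (brace_sum []) \<approx> t'"
    using assms a b by (auto intro: Ext.eq_trans[OF Ext.add_zero])
  then show ?thesis using assms a b by (auto intro!: exI[of _ "[]"])
qed

lemma cov_eq_refl: "cov_eq q g a a"
  by (rule cov_eqI) simp_all

lemma cov_eq_sym: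
  assumes "cov_eq q g a b"
  shows "cov_eq q g b a"
proof -
  obtain y t cs where a: "a = (y, t, cs)" by (cases a rule: prod_cases3)
  obtain y' t' cs' where b: "b = (y', t', cs')" by (cases b rule: prod_cases3)
  obtain ks where ks: "snd ` set ks \<subseteq> lcarrier g"
      "\<forall>x. comb_coeff cs x = comb_coeff cs' x + of_nat q * comb_coeff ks x"
      "FAdd t (brace_sum ks) \<approx> t'" and y: "y = y'"
    using assms a b by auto
  have "FAdd t' (brace_sum (comb_neg ks)) \<approx> FAdd (FAdd t (brace_sum ks)) (brace_sum (comb_neg ks))"
    by (intro Ext.add_cong Ext.eq_refl Ext.eq_sym[OF ks(3)])
  also have "\<dots> \<approx> t" by (rule qext_eq_if_lin_coeff_eq) (simp add: fun_eq_iff)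
  finally have t: "FAdd t' (brace_sum (comb_neg ks)) \<approx> t" .
  show ?thesis unfolding a b cov_eq.simps
    by (intro conjI exI[of _ "comb_neg ks"] t) (use ks y in \<open>simp_all add: algebra_simps\<close>)
qed

lemma cov_eq_trans:
  assumes "cov_eq q g a b" "cov_eq q g b c"
  shows "cov_eq q g a c"
proof -
  obtain y t cs where a: "a = (y, t, cs)" by (cases a rule: prod_cases3)
  obtain y' t' cs' where b: "b = (y', t', cs')" by (cases b rule: prod_cases3)
  obtain y'' t'' cs'' where c: "c = (y'', t'', cs'')" by (cases c rule: prod_cases3)
  obtain ks ks' where ks: "snd ` set ks \<subseteq> lcarrier g"
      "\<forall>x. comb_coeff cs x = comb_coeff cs' x + of_nat q * comb_coeff ks x"
      "FAdd t (brace_sum ks) \<approx> t'"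
    and ks': "snd ` set ks' \<subseteq> lcarrier g"
      "\<forall>x. comb_coeff cs' x = comb_coeff cs'' x + of_nat q * comb_coeff ks' x"
      "FAdd t' (brace_sum ks') \<approx> t''"
    and y: "y = y'" "y' = y''"
    using assms a b c by auto
  have "FAdd t (brace_sum (ks @ ks')) \<approx> FAdd (FAdd t (brace_sum ks)) (brace_sum ks')"
    by (rule qext_eq_if_lin_coeff_eq) (simp add: fun_eq_iff algebra_simps)
  also have "\<dots> \<approx> FAdd t' (brace_sum ks')" by (intro Ext.add_cong Ext.eq_refl ks(3))
  also have "\<dots> \<approx> t''" by (rule ks'(3))
  finally have t: "FAdd t (brace_sum (ks @ ks')) \<approx> t''" .
  show ?thesis unfolding a c cov_eq.simps
    by (intro conjI exI[of _ "ks @ ks'"] t) (use ks ks' y in \<open>simp_all add: algebra_simps image_Un\<close>)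
qed

lemma cov_add_cong:
  assumes "cov_eq q g a a'" "cov_eq q g b b'"
  shows "cov_eq q g (cov_add g a b) (cov_add g a' b')"
proof -
  obtain y t cs where a: "a = (y, t, cs)" by (cases a rule: prod_cases3)
  obtain y' t' cs' where a': "a' = (y', t', cs')" by (cases a' rule: prod_cases3)
  obtain z s ds where b: "b = (z, s, ds)" by (cases b rule: prod_cases3)
  obtain z' s' ds' where b': "b' = (z', s', ds')" by (cases b' rule: prod_cases3)
  obtain ks ks' where ks: "snd ` set ks \<subseteq> lcarrier g"
      "\<forall>x. comb_coeff cs x = comb_coeff cs' x + of_nat q * comb_coeff ks x"
      "FAdd t (brace_sum ks) \<approx> t'"
    and ks': "snd ` set ks' \<subseteq> lcarrier g"
      "\<forall>x. comb_coeff ds x = comb_coeff ds' x + of_nat q * comb_coeff ks' x"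
      "FAdd s (brace_sum ks') \<approx> s'"
    and y: "y = y'" "z = z'"
    using assms a a' b b' by auto
  have "FAdd (FAdd t s) (brace_sum (ks @ ks'))
      \<approx> FAdd (FAdd t (brace_sum ks)) (FAdd s (brace_sum ks'))"
    by (rule qext_eq_if_lin_coeff_eq) (simp add: fun_eq_iff algebra_simps)
  also have "\<dots> \<approx> FAdd t' s'" by (intro Ext.add_cong ks(3) ks'(3))
  finally have t: "FAdd (FAdd t s) (brace_sum (ks @ ks')) \<approx> FAdd t' s'" .
  show ?thesis unfolding a a' b b' cov_add.simps cov_eq.simps
    by (intro conjI exI[of _ "ks @ ks'"] t) (use ks ks' y in \<open>simp_all add: algebra_simps image_Un\<close>)
qed

lemma cov_neg_cong:
  assumes "cov_eq q g a a'"
  shows "cov_eq q g (cov_neg g a) (cov_neg g a')"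
proof -
  obtain y t cs where a: "a = (y, t, cs)" by (cases a rule: prod_cases3)
  obtain y' t' cs' where a': "a' = (y', t', cs')" by (cases a' rule: prod_cases3)
  obtain ks where ks: "snd ` set ks \<subseteq> lcarrier g"
      "\<forall>x. comb_coeff cs x = comb_coeff cs' x + of_nat q * comb_coeff ks x"
      "FAdd t (brace_sum ks) \<approx> t'" and y: "y = y'"
    using assms a a' by auto
  have "FAdd (FNeg t) (brace_sum (comb_neg ks)) \<approx> FNeg (FAdd t (brace_sum ks))"
    by (rule qext_eq_if_lin_coeff_eq) (simp add: fun_eq_iff algebra_simps)
  also have "\<dots> \<approx> FNeg t'" by (intro Ext.neg_cong ks(3))
  finally have t: "FAdd (FNeg t) (brace_sum (comb_neg ks)) \<approx> FNeg t'" .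
  show ?thesis unfolding a a' cov_neg.simps cov_eq.simps
    by (intro conjI exI[of _ "comb_neg ks"] t) (use ks y in \<open>simp_all add: algebra_simps\<close>)
qed

lemma cov_smul_cong:
  assumes "cov_eq q g a a'"
  shows "cov_eq q g (cov_smul g r a) (cov_smul g r a')"
proof -
  obtain y t cs where a: "a = (y, t, cs)" by (cases a rule: prod_cases3)
  obtain y' t' cs' where a': "a' = (y', t', cs')" by (cases a' rule: prod_cases3)
  obtain ks where ks: "snd ` set ks \<subseteq> lcarrier g"
      "\<forall>x. comb_coeff cs x = comb_coeff cs' x + of_nat q * comb_coeff ks x"
      "FAdd t (brace_sum ks) \<approx> t'" and y: "y = y'"
    using assms a a' by auto
  have "FAdd (FSmul r t) (brace_sum (comb_smul r ks)) \<approx> FSmul r (FAdd t (brace_sum ks))"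
    by (rule qext_eq_if_lin_coeff_eq) (simp add: fun_eq_iff algebra_simps)
  also have "\<dots> \<approx> FSmul r t'" by (intro Ext.smul_cong ks(3))
  finally have t: "FAdd (FSmul r t) (brace_sum (comb_smul r ks)) \<approx> FSmul r t'" .
  show ?thesis unfolding a a' cov_smul.simps cov_eq.simps
    by (intro conjI exI[of _ "comb_smul r ks"] t) (use ks y in \<open>simp_all add: algebra_simps\<close>)
qed

lemma cov_br_cong:
  assumes "cov_eq q g a a'" "cov_eq q g b b'"
  shows "cov_eq q g (cov_br g a b) (cov_br g a' b')"
proof -
  have "cov_br g a b = cov_br g a' b'"
    using assms
      by (cases a rule: prod_cases3, cases a' rule: prod_cases3, cases b rule: prod_cases3,
        cases b' rule: prod_cases3) auto
  then show ?thesis by (simp add: cov_eq_refl)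
qed


lemma cov_valid_zero: "cov_valid q g (cov_zero g)"
proof -
  have "FAdd (FSmul (of_nat q) FZero) (brace_sum []) \<approx> FZero"
    by (rule qext_eq_if_lin_coeff_eq) (simp add: fun_eq_iff)
  also have "FZero \<approx> brace (lzero g)" by (rule Ext.eq_sym[OF brace_zero])
  finally show ?thesis by (simp add: cov_zero_def)
qed

lemma cov_valid_of: "y \<in> lcarrier g \<Longrightarrow> cov_valid q g (cov_of y)"
  unfolding cov_of_def by (simp, rule qext_eq_if_lin_coeff_eq) (simp add: fun_eq_iff)

lemma cov_valid_fst: "cov_valid q g a \<Longrightarrow> fst a \<in> lcarrier g"
  by (cases a rule: prod_cases3) simp

lemma cov_valid_add:
  assumes "cov_valid q g a" "cov_valid q g b"
  shows "cov_valid q g (cov_add g a b)"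
proof -
  obtain y t cs where a: "a = (y, t, cs)" by (cases a rule: prod_cases3)
  obtain z s ds where b: "b = (z, s, ds)" by (cases b rule: prod_cases3)
  have "FAdd (FSmul (of_nat q) (FAdd t s)) (brace_sum (cs @ ds)) \<approx>
        FAdd (FAdd (FSmul (of_nat q) t) (brace_sum cs)) (FAdd (FSmul (of_nat q) s) (brace_sum ds))"
    by (rule qext_eq_if_lin_coeff_eq) (simp add: fun_eq_iff algebra_simps)
  also have "\<dots> \<approx> FAdd (brace y) (brace z)" using assms a b by (intro Ext.add_cong) auto
  also have "\<dots> \<approx> brace (ladd g y z)" using assms a b by (intro Ext.eq_sym[OF brace_add]) auto
  finally show ?thesis using assms a b by (simp add: image_Un)
qed

lemma cov_valid_neg:
  assumes "cov_valid q g a"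
  shows "cov_valid q g (cov_neg g a)"
proof -
  obtain y t cs where a: "a = (y, t, cs)" by (cases a rule: prod_cases3)
  have "FAdd (FSmul (of_nat q) (FNeg t)) (brace_sum (comb_neg cs)) \<approx>
        FNeg (FAdd (FSmul (of_nat q) t) (brace_sum cs))"
    by (rule qext_eq_if_lin_coeff_eq) (simp add: fun_eq_iff algebra_simps)
  also have "\<dots> \<approx> FNeg (brace y)" using assms a by (intro Ext.neg_cong) auto
  also have "\<dots> \<approx> brace (lneg g y)" using assms a by (intro Ext.eq_sym[OF brace_neg]) auto
  finally show ?thesis using assms a by simp
qed

lemma cov_valid_smul:
  assumes "cov_valid q g a"
  shows "cov_valid q g (cov_smul g r a)"
proof -
  obtain y t cs where a: "a = (y, t, cs)" by (cases a rule: prod_cases3)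
  have "FAdd (FSmul (of_nat q) (FSmul r t)) (brace_sum (comb_smul r cs)) \<approx>
        FSmul r (FAdd (FSmul (of_nat q) t) (brace_sum cs))"
    by (rule qext_eq_if_lin_coeff_eq) (simp add: fun_eq_iff algebra_simps)
  also have "\<dots> \<approx> FSmul r (brace y)" using assms a by (intro Ext.smul_cong) auto
  also have "\<dots> \<approx> brace (lsmul g r y)" using assms a by (intro Ext.eq_sym[OF brace_smul]) auto
  finally show ?thesis using assms a by simp
qed

lemma cov_valid_br:
  assumes "cov_valid q g a" "cov_valid q g b"
  shows "cov_valid q g (cov_br g a b)"
proof -
  obtain y t cs where a: "a = (y, t, cs)" by (cases a rule: prod_cases3)
  obtain z s ds where b: "b = (z, s, ds)" by (cases b rule: prod_cases3)
  have "FAdd (FSmul (of_nat q) (wedge y z)) (brace_sum []) \<approx> FSmul (of_nat q) (wedge y z)"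
    by (rule qext_eq_if_lin_coeff_eq) (simp add: fun_eq_iff)
  also have "\<dots> \<approx> brace (lbr g y z)" using assms a b by (intro Ext.eq_sym[OF qext_eq.rel10]) auto
  finally show ?thesis using assms a b by simp
qed

lemma cov_add_assoc: "cov_valid q g a \<Longrightarrow> cov_valid q g b \<Longrightarrow> cov_valid q g c \<Longrightarrow>
    cov_eq q g (cov_add g (cov_add g a b) c) (cov_add g a (cov_add g b c))"
  by (cases a rule: prod_cases3, cases b rule: prod_cases3, cases c rule: prod_cases3)
     (rule cov_eqI; simp add: G.add_assoc Ext.add_assoc)

lemma cov_add_comm: "cov_valid q g a \<Longrightarrow> cov_valid q g b \<Longrightarrow>
    cov_eq q g (cov_add g a b) (cov_add g b a)"
  by (cases a rule: prod_cases3, cases b rule: prod_cases3)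
     (rule cov_eqI; simp add: G.add_comm Ext.add_comm)

lemma cov_add_zero: "cov_valid q g a \<Longrightarrow> cov_eq q g (cov_add g a (cov_zero g)) a"
  by (cases a rule: prod_cases3) (rule cov_eqI; simp add: cov_zero_def G.add_zero Ext.add_zero)

lemma cov_add_neg: "cov_valid q g a \<Longrightarrow> cov_eq q g (cov_add g a (cov_neg g a)) (cov_zero g)"
  by (cases a rule: prod_cases3) (rule cov_eqI; simp add: cov_zero_def G.add_neg Ext.add_neg)

lemma cov_smul_add: "cov_valid q g a \<Longrightarrow> cov_valid q g b \<Longrightarrow>
    cov_eq q g (cov_smul g r (cov_add g a b)) (cov_add g (cov_smul g r a) (cov_smul g r b))"
  by (cases a rule: prod_cases3, cases b rule: prod_cases3)
     (rule cov_eqI; simp add: G.smul_add Ext.smul_add)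

lemma cov_add_smul: "cov_valid q g a \<Longrightarrow>
    cov_eq q g (cov_smul g (r + s) a) (cov_add g (cov_smul g r a) (cov_smul g s a))"
  by (cases a rule: prod_cases3) (rule cov_eqI; simp add: G.add_smul Ext.add_smul algebra_simps)

lemma cov_smul_smul: "cov_valid q g a \<Longrightarrow>
    cov_eq q g (cov_smul g r (cov_smul g s a)) (cov_smul g (r * s) a)"
  by (cases a rule: prod_cases3) (rule cov_eqI; simp add: G.smul_smul Ext.smul_smul algebra_simps)

lemma cov_one_smul: "cov_valid q g a \<Longrightarrow> cov_eq q g (cov_smul g 1 a) a"
  by (cases a rule: prod_cases3) (rule cov_eqI; simp add: G.one_smul Ext.one_smul)

lemma cov_br_add_left: "cov_valid q g a \<Longrightarrow> cov_valid q g b \<Longrightarrow> cov_valid q g c \<Longrightarrow>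
    cov_eq q g (cov_br g (cov_add g a b) c) (cov_add g (cov_br g a c) (cov_br g b c))"
  by (cases a rule: prod_cases3, cases b rule: prod_cases3, cases c rule: prod_cases3)
     (rule cov_eqI; simp add: G.br_add_left qext_eq.rel2)

lemma cov_br_add_right: "cov_valid q g a \<Longrightarrow> cov_valid q g b \<Longrightarrow> cov_valid q g c \<Longrightarrow>
    cov_eq q g (cov_br g a (cov_add g b c)) (cov_add g (cov_br g a b) (cov_br g a c))"
  by (cases a rule: prod_cases3, cases b rule: prod_cases3, cases c rule: prod_cases3)
     (rule cov_eqI; simp add: G.br_add_right qext_eq.rel3)

lemma cov_br_smul_left: "cov_valid q g a \<Longrightarrow> cov_valid q g b \<Longrightarrow>
    cov_eq q g (cov_br g (cov_smul g r a) b) (cov_smul g r (cov_br g a b))"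
  by (cases a rule: prod_cases3, cases b rule: prod_cases3)
     (rule cov_eqI; simp add: G.br_smul_left Ext.eq_sym[OF qext_eq.rel1a])

lemma cov_br_smul_right: "cov_valid q g a \<Longrightarrow> cov_valid q g b \<Longrightarrow>
    cov_eq q g (cov_br g a (cov_smul g r b)) (cov_smul g r (cov_br g a b))"
  by (cases a rule: prod_cases3, cases b rule: prod_cases3)
     (rule cov_eqI; simp add: G.br_smul_right Ext.eq_sym[OF qext_eq.rel1b])

lemma cov_br_self: "cov_valid q g a \<Longrightarrow> cov_eq q g (cov_br g a a) (cov_zero g)"
  by (cases a rule: prod_cases3) (rule cov_eqI; simp add: cov_zero_def G.br_self qext_eq.rel11)

lemma cov_jacobi: "cov_valid q g a \<Longrightarrow> cov_valid q g b \<Longrightarrow> cov_valid q g c \<Longrightarrow>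
    cov_eq q g (cov_add g (cov_br g a (cov_br g b c))
                  (cov_add g (cov_br g b (cov_br g c a)) (cov_br g c (cov_br g a b)))) (cov_zero g)"
  by (cases a rule: prod_cases3, cases b rule: prod_cases3, cases c rule: prod_cases3)
     (rule cov_eqI; simp add: cov_zero_def G.jacobi wedge_jacobi)

end

text \<open>
  The theorem asks for a Lie algebra on ('a list \<Rightarrow> 'r) set, so points of the covering are
  encoded injectively as functions 'a list \<Rightarrow> 'r. The function tuple3 f0 f1 f2 packs three such
  functions: fi is read off the lists replicate i undefined @ ys @ ys @ ys.\<close>

definition tuple3 :: "('a list \<Rightarrow> 'r::zero) \<Rightarrow> ('a list \<Rightarrow> 'r) \<Rightarrow> ('a list \<Rightarrow> 'r) \<Rightarrow> 'a list \<Rightarrow> 'r" where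
  "tuple3 f0 f1 f2 xs = (let n = length xs; k = n mod 3; ys = take (n div 3) (drop k xs) in
      if xs = replicate k undefined @ ys @ ys @ ys
      then (if k = 0 then f0 ys else if k = 1 then f1 ys else f2 ys) else 0)"

lemma tuple3_at:
  assumes "k < 3"
  shows "tuple3 f0 f1 f2 (replicate k undefined @ ys @ ys @ ys)
       = (if k = 0 then f0 ys else if k = 1 then f1 ys else f2 ys)"
proof -
  let ?xs = "replicate k undefined @ ys @ ys @ ys"
  have l: "length ?xs = k + 3 * length ys" by simp
  have m: "length ?xs mod 3 = k" "length ?xs div 3 = length ys"
    using assms unfolding l by presburger+
  have "take (length ys) (drop k ?xs) = ys" by simp
  then show ?thesis unfolding tuple3_def Let_def m by simp
qed

lemma tuple3_components:
  "tuple3 f0 f1 f2 (ys @ ys @ ys) = f0 ys"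
  "tuple3 f0 f1 f2 (undefined # ys @ ys @ ys) = f1 ys"
  "tuple3 f0 f1 f2 (undefined # undefined # ys @ ys @ ys) = f2 ys"
  using tuple3_at[of 0] tuple3_at[of 1] tuple3_at[of 2] by (simp_all add: numeral_2_eq_2)

lemma tuple3_eq_iff: "tuple3 f0 f1 f2 = tuple3 f0' f1' f2' \<longleftrightarrow> f0 = f0' \<and> f1 = f1' \<and> f2 = f2'"
proof (intro iffI conjI ext)
  fix ys
  assume eq: "tuple3 f0 f1 f2 = tuple3 f0' f1' f2'"
  show "f0 ys = f0' ys" using fun_cong[OF eq, of "ys @ ys @ ys"] by (simp add: tuple3_components)
  show "f1 ys = f1' ys"
    using fun_cong[OF eq, of "undefined # ys @ ys @ ys"] by (simp add: tuple3_components)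
  show "f2 ys = f2' ys"
    using fun_cong[OF eq, of "undefined # undefined # ys @ ys @ ys"]
      by (simp add: tuple3_components)
qed simp

definition length_ind :: "nat \<Rightarrow> 'a list \<Rightarrow> 'r::zero_neq_one" where
  "length_ind n = (\<lambda>xs. if length xs = n then 1 else 0)"

lemma length_ind_eq_iff: "(length_ind n :: 'a list \<Rightarrow> 'r::zero_neq_one) = length_ind m \<longleftrightarrow> n = m"
proof
  assume "(length_ind n :: 'a list \<Rightarrow> 'r) = length_ind m"
  from fun_cong[OF this, of "replicate n undefined"] show "n = m"
    by (auto simp: length_ind_def split: if_splits)
qed simp

definition singleton_ind :: "'a \<Rightarrow> 'a list \<Rightarrow> 'r::zero_neq_one" where
  "singleton_ind a = (\<lambda>xs. if xs = [a] then 1 else 0)"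

lemma singleton_ind_eq_iff:
  "(singleton_ind a :: 'a list \<Rightarrow> 'r::zero_neq_one) = singleton_ind b \<longleftrightarrow> a = b"
proof
  assume "(singleton_ind a :: 'a list \<Rightarrow> 'r) = singleton_ind b"
  from fun_cong[OF this, of "[a]"] show "a = b" by (auto simp: singleton_ind_def split: if_splits)
qed simp

lemma const_fun_eq_iff: "((\<lambda>_. c) = (\<lambda>_. d)) \<longleftrightarrow> c = d"
  by metis

fun enc_term :: "('a xgen, 'r::zero_neq_one) fterm \<Rightarrow> 'a list \<Rightarrow> 'r" where
  "enc_term (FGen (XWedge a b)) = tuple3 (length_ind 0) (singleton_ind a) (singleton_ind b)"
| "enc_term (FGen (XBrace a)) = tuple3 (length_ind 1) (singleton_ind a) (\<lambda>_. 0)"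
| "enc_term FZero = tuple3 (length_ind 2) (\<lambda>_. 0) (\<lambda>_. 0)"
| "enc_term (FAdd x y) = tuple3 (length_ind 3) (enc_term x) (enc_term y)"
| "enc_term (FNeg x) = tuple3 (length_ind 4) (enc_term x) (\<lambda>_. 0)"
| "enc_term (FSmul c x) = tuple3 (length_ind 5) (\<lambda>_. c) (enc_term x)"
| "enc_term (FBr x y) = tuple3 (length_ind 6) (enc_term x) (enc_term y)"

lemma enc_term_inj: "enc_term s = enc_term t \<Longrightarrow> s = t"
proof (induction s arbitrary: t)
  case (FGen x)
  then show ?case
    by (cases x; cases t rule: enc_term.cases)
      (auto simp: tuple3_eq_iff length_ind_eq_iff singleton_ind_eq_iff)
next
  case FZero
  then show ?case by (cases t rule: enc_term.cases) (auto simp: tuple3_eq_iff length_ind_eq_iff)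
next
  case (FAdd x1 x2)
  then show ?case by (cases t rule: enc_term.cases) (auto simp: tuple3_eq_iff length_ind_eq_iff)
next
  case (FNeg x)
  then show ?case by (cases t rule: enc_term.cases) (auto simp: tuple3_eq_iff length_ind_eq_iff)
next
  case (FSmul x1 x2)
  then show ?case
    by (cases t rule: enc_term.cases) (auto simp: tuple3_eq_iff length_ind_eq_iff const_fun_eq_iff)
next
  case (FBr x1 x2)
  then show ?case by (cases t rule: enc_term.cases) (auto simp: tuple3_eq_iff length_ind_eq_iff)
qed

fun enc_comb :: "('r::zero_neq_one \<times> 'a) list \<Rightarrow> 'a list \<Rightarrow> 'r" where
  "enc_comb [] = tuple3 (length_ind 0) (\<lambda>_. 0) (\<lambda>_. 0)"
| "enc_comb ((c, a) # cs) =
     tuple3 (length_ind 1) (tuple3 (\<lambda>_. c) (singleton_ind a) (\<lambda>_. 0)) (enc_comb cs)"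

lemma enc_comb_inj: "enc_comb cs = enc_comb ds \<Longrightarrow> cs = ds"
proof (induction cs arbitrary: ds)
  case Nil
  then show ?case by (cases ds rule: enc_comb.cases) (auto simp: tuple3_eq_iff length_ind_eq_iff)
next
  case (Cons p cs)
  then show ?case
    by (cases p; cases ds rule: enc_comb.cases)
      (auto simp: tuple3_eq_iff length_ind_eq_iff singleton_ind_eq_iff const_fun_eq_iff)
qed

fun enc_cov :: "('a, 'r::zero_neq_one) cov \<Rightarrow> 'a list \<Rightarrow> 'r" where
  "enc_cov (y, t, cs) = tuple3 (singleton_ind y) (enc_term t) (enc_comb cs)"

lemma inj_enc_cov: "inj (enc_cov :: ('a, 'r::zero_neq_one) cov \<Rightarrow> _)"
proof (rule injI)
  fix a b :: "('a, 'r) cov"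
  assume "enc_cov a = enc_cov b"
  then show "a = b"
    by (cases a rule: prod_cases3, cases b rule: prod_cases3)
       (auto simp: tuple3_eq_iff singleton_ind_eq_iff dest: enc_term_inj enc_comb_inj)
qed

context q_exterior_square
begin

sublocale Cov: setoid_lie_quotient "{a. cov_valid q g a}" "cov_eq q g" "cov_add g" "cov_zero g"
    "cov_neg g" "cov_smul g" "cov_br g" enc_cov
  by unfold_locales
    (auto intro: cov_eq_sym cov_eq_trans
      simp: cov_valid_zero cov_valid_add cov_valid_neg cov_valid_smul cov_valid_br
      cov_eq_refl cov_add_cong cov_neg_cong cov_smul_cong cov_br_cong
      cov_add_assoc cov_add_comm cov_add_zero cov_add_neg cov_smul_add cov_add_smul cov_smul_smul
      cov_one_smul cov_br_add_left cov_br_add_right cov_br_smul_left cov_br_smul_right cov_br_self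
      cov_jacobi inj_on_subset[OF inj_enc_cov])

abbreviation covering where "covering \<equiv> Cov.quotient_lie"

lemma cov_br_eq_zero_if_fst_zero:
  assumes "fst a = lzero g" "cov_valid q g b"
  shows "cov_eq q g (cov_br g a b) (cov_zero g)"
  using assms by (cases a rule: prod_cases3, cases b rule: prod_cases3)
    (rule cov_eqI; simp add: cov_zero_def G.br_zero_left wedge_zero_left)

lemma cov_qsmul_eq_zero_if_fst_zero:
  assumes "cov_valid q g a" "fst a = lzero g"
  shows "cov_eq q g (cov_smul g (of_nat q) a) (cov_zero g)"
proof -
  obtain t cs where a: "a = (lzero g, t, cs)" using assms(2) by (cases a rule: prod_cases3) auto
  have "FAdd (FSmul (of_nat q) t) (brace_sum cs) \<approx> FZero"
    using assms a brace_zero Ext.eq_trans by auto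
  then show ?thesis using assms a
    by (simp add: cov_zero_def G.smul_zero del: of_nat_eq_0_iff) (intro exI[of _ cs], simp)
qed

lemma brace_sum_eq_zero_if_q_zero:
  assumes "q = 0" "snd ` set ks \<subseteq> lcarrier g"
  shows "brace_sum ks \<approx> FZero"
  using assms(2)
proof (induction ks rule: brace_sum.induct)
  case (2 c x ks)
  then have "FAdd (FSmul c (brace x)) (brace_sum ks) \<approx> FAdd (FSmul c FZero) FZero"
    using assms(1) by (intro Ext.add_cong Ext.smul_cong qext_eq.rel_q0) auto
  also have "\<dots> \<approx> FZero" by (rule qext_eq_if_lin_coeff_eq) (simp add: fun_eq_iff)
  finally show ?case by simp
qed simp

text \<open>Here q-torsion-freeness enters: a combination ks with q ks = 0 has brace sum zero.\<close>

lemma fst_mem_ext_center_if_central: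
  assumes tf: "q_torsion_free q TYPE('r)" and a: "cov_valid q g a"
    and central: "\<And>b. cov_valid q g b \<Longrightarrow> cov_eq q g (cov_br g a b) (cov_zero g)"
  shows "fst a \<in> ext_center_q q g"
proof -
  obtain y t cs where a_eq: "a = (y, t, cs)" by (cases a rule: prod_cases3)
  have "wedge y y' \<approx> FZero" if y': "y' \<in> lcarrier g" for y'
  proof -
    have "cov_eq q g (cov_br g a (cov_of y')) (cov_zero g)" using central cov_valid_of y' by blast
    then obtain ks where ks: "snd ` set ks \<subseteq> lcarrier g" "\<forall>x. of_nat q * comb_coeff ks x = 0"
        "FAdd (wedge y y') (brace_sum ks) \<approx> FZero"
      using a_eq by (auto simp: cov_of_def cov_zero_def)
    have "brace_sum ks \<approx> FZero"
    proof (cases "q = 0")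
      case True
      then show ?thesis using brace_sum_eq_zero_if_q_zero ks(1) by blast
    next
      case False
      then have "comb_coeff ks x = 0" for x
        using tf ks(2) unfolding q_torsion_free_def by auto
      then show ?thesis
        by (intro qext_eq_if_lin_coeff_eq)
          (simp add: fun_eq_iff lin_coeff_brace_sum split: fterm.split xgen.split)
    qed
    then have "wedge y y' \<approx> FAdd (wedge y y') (brace_sum ks)"
      by (meson Ext.add_cong Ext.add_zero Ext.eq_refl Ext.eq_sym Ext.eq_trans UNIV_I)
    then show ?thesis using ks(3) by (rule Ext.eq_trans)
  qed
  then show ?thesis using a a_eq by (simp add: ext_center_q_def)
qed

sublocale Cover: Lie_algebra covering
  by unfold_locales (rule Cov.lie_algebra_quotient_lie)

lemma covering_carrierE:
  assumes "X \<in> lcarrier covering"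
  obtains a where "cov_valid q g a" "X = Cov.eq_class a"
  using assms by (auto simp: Cov.quotient_lie_carrier)

lemma eq_class_in_covering: "cov_valid q g a \<Longrightarrow> Cov.eq_class a \<in> lcarrier covering"
  by (simp add: Cov.quotient_lie_carrier)

lemma eq_class_mem_center_if_fst_zero:
  assumes a: "cov_valid q g a" and "fst a = lzero g"
  shows "Cov.eq_class a \<in> lie_center covering"
proof -
  have "lbr covering (Cov.eq_class a) Y = lzero covering" if "Y \<in> lcarrier covering" for Y
  proof -
    obtain b where b: "cov_valid q g b" "Y = Cov.eq_class b"
      using \<open>Y \<in> lcarrier covering\<close> by (rule covering_carrierE)
    have "cov_eq q g (cov_br g a b) (cov_zero g)"
      using assms b by (intro cov_br_eq_zero_if_fst_zero)
    then show ?thesis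
      using a b by (simp add: Cov.quotient_lie_ops Cov.eq_class_eq_iff cov_valid_br cov_valid_zero)
  qed
  then show ?thesis using eq_class_in_covering[OF a] by (simp add: lie_center_def)
qed

lemma fst_zero_if_eq_class_mem_center:
  assumes tf: "q_torsion_free q TYPE('r)" and triv: "ext_center_q q g = {lzero g}"
    and a: "cov_valid q g a" and central: "Cov.eq_class a \<in> lie_center covering"
  shows "fst a = lzero g"
proof -
  have "cov_eq q g (cov_br g a b) (cov_zero g)" if b: "cov_valid q g b" for b
  proof -
    have "lbr covering (Cov.eq_class a) (Cov.eq_class b) = lzero covering"
      using central eq_class_in_covering[OF b] by (simp add: lie_center_def)
    then show ?thesis
      using a b by (simp add: Cov.quotient_lie_ops Cov.eq_class_eq_iff cov_valid_br cov_valid_zero)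
  qed
  then have "fst a \<in> ext_center_q q g" using fst_mem_ext_center_if_central[OF tf a] by blast
  then show ?thesis using triv by simp
qed

lemma covering_center_eq_center_q:
  assumes tf: "q_torsion_free q TYPE('r)" and triv: "ext_center_q q g = {lzero g}"
  shows "lie_center covering = lie_center_q q covering"
proof (intro equalityI subsetI)
  fix X assume X: "X \<in> lie_center covering"
  then obtain a where a: "cov_valid q g a" "X = Cov.eq_class a"
    using Cover.center_closed covering_carrierE by blast
  then have "fst a = lzero g" using fst_zero_if_eq_class_mem_center[OF tf triv] X by simp
  then have "lsmul covering (of_nat q) X = lzero covering"
    using a cov_qsmul_eq_zero_if_fst_zero
    by (simp add: Cov.quotient_lie_ops Cov.eq_class_eq_iff cov_valid_smul cov_valid_zero)
  then show "X \<in> lie_center_q q covering" using X by (simp add: lie_center_q_def)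
qed (simp add: lie_center_q_def)

lemma center_coset_eq_class_eq_iff:
  assumes tf: "q_torsion_free q TYPE('r)" and triv: "ext_center_q q g = {lzero g}"
    and a: "cov_valid q g a" and b: "cov_valid q g b"
  shows "center_coset covering (Cov.eq_class a) = center_coset covering (Cov.eq_class b)
    \<longleftrightarrow> fst a = fst b"
proof -
  let ?d = "cov_add g a (cov_neg g b)"
  have d: "cov_valid q g ?d" using a b by (simp add: cov_valid_add cov_valid_neg)
  have "center_coset covering (Cov.eq_class a) = center_coset covering (Cov.eq_class b)
      \<longleftrightarrow> Cov.eq_class ?d \<in> lie_center covering"
    using Cover.center_coset_eq_iff[OF eq_class_in_covering[OF a] eq_class_in_covering[OF b]] a b
    by (simp add: Cov.quotient_lie_ops cov_valid_neg)
  also have "\<dots> \<longleftrightarrow> ladd g (fst a) (lneg g (fst b)) = lzero g"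
    using eq_class_mem_center_if_fst_zero[OF d] fst_zero_if_eq_class_mem_center[OF tf triv d]
    by auto
  also have "\<dots> \<longleftrightarrow> fst a = fst b"
    using G.eq_if_diff_zero[OF cov_valid_fst[OF a] cov_valid_fst[OF b]]
      G.add_neg[OF cov_valid_fst[OF b]]
    by auto
  finally show ?thesis .
qed

definition cov_iso :: "'a \<Rightarrow> ('a list \<Rightarrow> 'r) set set" where
  "cov_iso y = center_coset covering (Cov.eq_class (cov_of y))"

lemma lie_iso_cov_iso:
  assumes tf: "q_torsion_free q TYPE('r)" and triv: "ext_center_q q g = {lzero g}"
  shows "lie_iso cov_iso g (quot_center covering)"
proof -
  note coset_iff = center_coset_eq_class_eq_iff[OF tf triv]
  have hom: "lie_hom cov_iso g (quot_center covering)"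
    unfolding lie_hom_def cov_iso_def using cov_valid_of eq_class_in_covering
    by (auto simp: Cover.quot_center_carrier Cover.quot_center_add Cover.quot_center_smul
        Cover.quot_center_br Cov.quotient_lie_ops coset_iff cov_valid_add cov_valid_smul
        cov_valid_br)
  have "inj_on cov_iso (lcarrier g)"
    by (rule inj_onI) (simp add: cov_iso_def coset_iff cov_valid_of)
  moreover have "cov_iso ` lcarrier g = lcarrier (quot_center covering)"
  proof (intro equalityI subsetI)
    fix X assume "X \<in> cov_iso ` lcarrier g"
    then show "X \<in> lcarrier (quot_center covering)" using hom by (auto simp: lie_hom_def)
  next
    fix X assume "X \<in> lcarrier (quot_center covering)"
    then obtain a where a: "cov_valid q g a" "X = center_coset covering (Cov.eq_class a)"
      by (auto simp: Cover.quot_center_carrier elim: covering_carrierE)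
    then have "X = cov_iso (fst a)"
      unfolding cov_iso_def using coset_iff cov_valid_of cov_valid_fst by simp
    then show "X \<in> cov_iso ` lcarrier g" using cov_valid_fst[OF a(1)] by blast
  qed
  ultimately show ?thesis using hom by (simp add: lie_iso_def bij_betw_def)
qed

lemma strongly_q_capable_if_ext_center_trivial:
  assumes "q_torsion_free q TYPE('r)" and "ext_center_q q g = {lzero g}"
  shows "strongly_q_capable q g TYPE(('a list \<Rightarrow> 'r) set)"
  unfolding strongly_q_capable_def
  using Cov.lie_algebra_quotient_lie covering_center_eq_center_q[OF assms] lie_iso_cov_iso[OF assms]
  by blast

end

lemma (in q_exterior_square) ext_center_q_trivial_if_strongly_q_capable:
  assumes "strongly_q_capable q g TYPE('m)"
  shows "ext_center_q q g = {lzero g}"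
proof -
  obtain m :: "('m, 'r) lie_alg" and f where
    "lie_algebra m" "lie_center m = lie_center_q q m" "lie_iso f g (quot_center m)"
    using assms unfolding strongly_q_capable_def by blast
  then interpret center_quotient_iso q g m f by unfold_locales
  show ?thesis by (rule ext_center_q_trivial)
qed

theorem theorem6p8:
  fixes q :: nat
    and g :: "('a, 'r::comm_ring_1) lie_alg"
  assumes "q_torsion_free q TYPE('r)"
    and "lie_algebra g"
  shows "(strongly_q_capable q g TYPE('m) \<longrightarrow> ext_center_q q g = {lzero g})
       \<and> (ext_center_q q g = {lzero g} \<longrightarrow> strongly_q_capable q g TYPE(('a list \<Rightarrow> 'r) set))"
proof -
  interpret q_exterior_square q g by unfold_locales (rule assms(2))
  show ?thesis
    using ext_center_q_trivial_if_strongly_q_capable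
      strongly_q_capable_if_ext_center_trivial[OF assms(1)]
    by blast
qed

end
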